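(* Assume the standing setting below. Let $\alpha\in(0,1/6]$ and $\gamma\in[\alpha,1-2\alpha]$ with $\alpha n,\gamma n$ integers. Let $x_1,\ldots,x_n$ be a uniformly random ordering of $X$; let $P_1$ be the first $\alpha n$ points, $P_2$ the next $\alpha n$ points, and $P_3$ the next $\gamma n$ points. Let $T_\alpha=\{c_1,\ldots,c_m\}$, $m\le k_+$, be a nonempty set of points that is a deterministic function of the set $P_1$, and let $C_i:=\{x\in X: i=\arg\min_{j\in[m]}\rho(c_j,x)\}$. Let $\mathcal{B}_a$ be a fixed $(\phi_\alpha/15)$-linear bin division of $X$ with respect to $\mathrm{OPT}$. Let $F_b:=\mathrm{far}_{k\phi_\alpha}(X\setminus P_1,T_\alpha)$, $F_c:=\mathrm{far}_{4(k+1)\phi_\alpha}(X\setminus P_1,T_\alpha)$, $F_d:=\mathrm{far}_{5(k+1)\phi_\alpha}(X\setminus P_1,T_\alpha)$, and let $\mathcal{B}_b$ (resp. $\mathcal{B}_c$) be a $(\phi_\alpha/3)$-linear bin division of $(X\setminus P_1)\setminus F_b$ (resp. $(X\setminus P_1)\setminus F_c$) with respect to $T_\alpha$, chosen as a deterministic function of $(P_1,T_\alpha)$. Let $E$ be the event that all of the following hold: (1) for each $i$ with $|C_i^*|\ge\phi_\alpha$, $C_i^*$ is well-represented in $P_1$ for $X$ and in $P_1\cup P_2$ for $X$; (2) each of $F_b,F_c$ is trivial or well-represented in $P_2$ for $X\setminus P_1$, and $F_d$ is trivial or well-represented in $P_3$ for $X\setminus P_1$; (3) $\mathcal{B}_a$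 is trivial or well-represented in $P_1$ for $X$, and each of $\mathcal{B}_b,\mathcal{B}_c$ is trivial or well-represented in $P_2$ for $X\setminus P_1$; (4) for each $i\in[m]$, among the first $\lceil\log_2(8k_+/\delta)\rceil$ points of $C_i\cap P_3$ in the order of the stream (or all of them, if there are fewer), there is a point $x^*$ with $\rho(c_i,x^* )\le\rho(c_i,x)$ for at least half of the points $x\in C_i\cap P_3$. Then $\Pr[E]\ge1-\delta/2$.
   Context: Standing setting: $(X,\rho)$ is a finite metric space with $|X|=n$; $k\ge2$ is an integer and $\delta\in(0,1)$; $\log$ is the natural logarithm; $k_+:=k+38\log(32k/\delta)$; for $\alpha>0$, $\phi_\alpha:=150\log(32k/\delta)/\alpha$. For nonempty $T\subseteq X$, $\rho(x,T):=\min_{y\in T}\rho(x,y)$ and $R(S,T):=\sum_{x\in S}\rho(x,T)$; ties are broken by a fixed ordering of $X$. $\mathrm{OPT}=\{c_1^*,\ldots,c_k^*\}$ is a set of at most $k$ points of $X$ minimizing $R(X,\cdot)$, and $C_i^*:=\{x\in X:i=\arg\min_{j\in[k]}\rho(c_j^*,x)\}$. For $S\subseteq X$ and real $r\ge0$, $\mathrm{far}_r(S,T)$ is the set of the $\lceil r\rceil$ points of $S$ furthest from $T$; if $|S|<r$, $\mathrm{far}_r(S,T):=S$ (trivial far set). For finite $W$, $A,B\subseteq W$, $B$ is well-represented in $A$ for $W$ if $|B\cap A|/|B|\in[r/2,\frac32 r]$ with $r=|A|/|W|$; a bin division is well-represented if all its bins are. A $z$-linear bin division ($z>0$) of $W$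 with respect to $T$ is a partition $(\mathcal{B}(1),\ldots,\mathcal{B}(L))$ of $W$ with: (1) if $z\le|W|$, $|\mathcal{B}(i)|\ge z(i+1)/2$ for all $i$; otherwise it is trivial, $\mathcal{B}(1):=W$; (2) $|\mathcal{B}(1)|\le\frac52 z$; (3) $|\mathcal{B}(i+1)|/|\mathcal{B}(i)|\le3/2$; (4) $\rho(x,T)\ge\rho(x',T)$ whenever $x\in\mathcal{B}(i)$, $x'\in\mathcal{B}(i+1)$. *)

theory Defs
  imports "HOL-Probability.Probability" "HOL-Combinatorics.Multiset_Permutations"
begin

text \<open>The fixed ordering of X used for tie-breaking is the linear order of the element type.\<close>

definition metric_on :: "'a set \<Rightarrow> ('a \<Rightarrow> 'a \<Rightarrow> real) \<Rightarrow> bool" where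
  "metric_on X \<rho> \<longleftrightarrow>
     (\<forall>x\<in>X. \<forall>y\<in>X. \<rho> x y \<ge> 0 \<and> \<rho> x y = \<rho> y x \<and> (\<rho> x y = 0 \<longleftrightarrow> x = y)) \<and>
     (\<forall>x\<in>X. \<forall>y\<in>X. \<forall>z\<in>X. \<rho> x z \<le> \<rho> x y + \<rho> y z)"

definition dist_set :: "('a \<Rightarrow> 'a \<Rightarrow> real) \<Rightarrow> 'a \<Rightarrow> 'a set \<Rightarrow> real" where
  "dist_set \<rho> x T = Min ((\<rho> x) ` T)"

definition cost :: "('a \<Rightarrow> 'a \<Rightarrow> real) \<Rightarrow> 'a set \<Rightarrow> 'a set \<Rightarrow> real" where
  "cost \<rho> S T = (\<Sum>x\<in>S. dist_set \<rho> x T)"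

text \<open>Cluster of the i-th centre (0-indexed) of a list of distinct centres cs:
  points of X whose nearest centre is cs!i; ties between centres broken by the
  fixed ordering of X.\<close>
definition cluster :: "('a::linorder \<Rightarrow> 'a \<Rightarrow> real) \<Rightarrow> 'a set \<Rightarrow> 'a list \<Rightarrow> nat \<Rightarrow> 'a set" where
  "cluster \<rho> X cs i = {x\<in>X. \<forall>j<length cs. j \<noteq> i \<longrightarrow>
       (\<rho> (cs!i) x < \<rho> (cs!j) x \<or> (\<rho> (cs!i) x = \<rho> (cs!j) x \<and> cs!i < cs!j))}"

text \<open>far_r(S,T): the ceil(r) points of S furthest from T (ties broken by the
  fixed ordering: among equidistant points the smaller one is preferred);
  S itself if |S| < r (trivial far set).\<close>
definition far_before :: "('a::linorder \<Rightarrow> 'a \<Rightarrow> real) \<Rightarrow> 'a set \<Rightarrow> 'a \<Rightarrow> 'a \<Rightarrow> bool" where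
  "far_before \<rho> T y x \<longleftrightarrow> dist_set \<rho> y T > dist_set \<rho> x T \<or>
       (dist_set \<rho> y T = dist_set \<rho> x T \<and> y < x)"

definition far :: "('a::linorder \<Rightarrow> 'a \<Rightarrow> real) \<Rightarrow> real \<Rightarrow> 'a set \<Rightarrow> 'a set \<Rightarrow> 'a set" where
  "far \<rho> r S T = (if real (card S) < r then S
     else {x\<in>S. card {y\<in>S. far_before \<rho> T y x} < nat \<lceil>r\<rceil>})"

definition far_trivial :: "real \<Rightarrow> 'a set \<Rightarrow> bool" where
  "far_trivial r S \<longleftrightarrow> real (card S) < r"

definition well_rep :: "'a set \<Rightarrow> 'a set \<Rightarrow> 'a set \<Rightarrow> bool" where
  "well_rep W A B \<longleftrightarrow>
     (let r = real (card A) / real (card W);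
          q = real (card (B \<inter> A)) / real (card B)
      in r / 2 \<le> q \<and> q \<le> 3 / 2 * r)"

definition bins_well_rep :: "'a set \<Rightarrow> 'a set \<Rightarrow> 'a set list \<Rightarrow> bool" where
  "bins_well_rep W A Bs \<longleftrightarrow> (\<forall>B\<in>set Bs. well_rep W A B)"

text \<open>z-linear bin division of W with respect to T, bins listed as B(1),...,B(L)
  = Bs!0,...,Bs!(L-1).\<close>
definition linear_bin_division ::
  "('a \<Rightarrow> 'a \<Rightarrow> real) \<Rightarrow> real \<Rightarrow> 'a set \<Rightarrow> 'a set \<Rightarrow> 'a set list \<Rightarrow> bool" where
  "linear_bin_division \<rho> z W T Bs \<longleftrightarrow>
     Bs \<noteq> [] \<and> \<Union>(set Bs) = W \<and>
     (\<forall>i j. i < j \<and> j < length Bs \<longrightarrow> Bs!i \<inter> Bs!j = {}) \<and>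
     (if z \<le> real (card W)
      then (\<forall>i<length Bs. real (card (Bs!i)) \<ge> z * (real i + 2) / 2)
      else Bs = [W]) \<and>
     real (card (Bs!0)) \<le> 5 / 2 * z \<and>
     (\<forall>i. i + 1 < length Bs \<longrightarrow> real (card (Bs!(i+1))) \<le> 3 / 2 * real (card (Bs!i))) \<and>
     (\<forall>i. i + 1 < length Bs \<longrightarrow>
        (\<forall>x\<in>Bs!i. \<forall>x'\<in>Bs!(i+1). dist_set \<rho> x T \<ge> dist_set \<rho> x' T))"

definition bins_trivial :: "real \<Rightarrow> 'a set \<Rightarrow> bool" where
  "bins_trivial z W \<longleftrightarrow> real (card W) < z"

definition kplus :: "nat \<Rightarrow> real \<Rightarrow> real" where
  "kplus k \<delta> = real k + 38 * ln (32 * real k / \<delta>)"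

definition phi :: "nat \<Rightarrow> real \<Rightarrow> real \<Rightarrow> real" where
  "phi k \<delta> \<alpha> = 150 * ln (32 * real k / \<delta>) / \<alpha>"

end

theory Submission
  imports Defs "HOL-Analysis.Harmonic_Numbers"
begin

(* Each clause of the event fails only on one of a few bad events, and each bad event depends on
   the random ordering only through the set of its first a points, through a later window of it,
   and through the order of the points inside that window.  The prefix set of a uniform ordering
   is a uniform a-subset, and given it the remaining points are in uniform order; rotating an
   ordering moves any window to the front.  So every bad event reduces to one about a uniform
   subset of fixed size or a uniform ordering.

   A fixed set B is badly represented in a uniform s-subset of W with probability at most
   2 exp (-s |B| / (10 |W|)): the generating function of the hypergeometric variable is dominated
   by the binomial one, which yields Chernoff bounds.  The bins of a linear bin division grow
   linearly, so their failure probabilities sum geometrically.  The first L points of a set D in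
   a uniform order all lie in the worse half of D with probability at most 2^-L.  With
   phi = 150 ln (32 k / delta) / alpha every bound is a small multiple of delta / k, and the union
   bound leaves a total failure probability below delta / 2. *)

section \<open>Counting uniform orderings\<close>

lemma card_Collect_ex_less_le:
  fixes m :: nat
  assumes "\<And>i. i < m \<Longrightarrow> real (card {x\<in>S. P i x}) \<le> e i"
  shows "real (card {x\<in>S. \<exists>i<m. P i x}) \<le> (\<Sum>i<m. e i)"
proof -
  have "card {x\<in>S. \<exists>i<m. P i x} = card (\<Union>i<m. {x\<in>S. P i x})"
    by (rule arg_cong[where f = card]) auto
  also have "\<dots> \<le> (\<Sum>i<m. card {x\<in>S. P i x})"
    by (rule card_UN_le) simp
  finally have "card {x\<in>S. \<exists>i<m. P i x} \<le> (\<Sum>i<m. card {x\<in>S. P i x})" .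
  then have "real (card {x\<in>S. \<exists>i<m. P i x}) \<le> (\<Sum>i<m. real (card {x\<in>S. P i x}))"
    by (simp flip: of_nat_sum)
  also have "\<dots> \<le> (\<Sum>i<m. e i)" using assms by (intro sum_mono) auto
  finally show ?thesis .
qed

lemma card_Collect_disj_le:
  assumes "real (card {x\<in>S. P x}) \<le> e\<^sub>1" "real (card {x\<in>S. Q x}) \<le> e\<^sub>2"
  shows "real (card {x\<in>S. P x \<or> Q x}) \<le> e\<^sub>1 + e\<^sub>2"
proof -
  have "{x\<in>S. P x \<or> Q x} = {x\<in>S. P x} \<union> {x\<in>S. Q x}" by auto
  then have "card {x\<in>S. P x \<or> Q x} \<le> card {x\<in>S. P x} + card {x\<in>S. Q x}"
    by (simp add: card_Un_le)
  then show ?thesis using assms by linarith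
qed

lemma prob_permutations_ge:
  assumes X: "finite X" and bad: "real (card {xs \<in> permutations_of_set X. \<not> P xs}) \<le> e * fact (card X)"
  shows "1 - e \<le> measure_pmf.prob (pmf_of_set (permutations_of_set X)) {xs. P xs}"
proof -
  let ?S = "permutations_of_set X"
  have "?S = {xs \<in> ?S. P xs} \<union> {xs \<in> ?S. \<not> P xs}" by auto
  also have "card \<dots> = card {xs \<in> ?S. P xs} + card {xs \<in> ?S. \<not> P xs}"
    by (rule card_Un_disjoint) auto
  finally have "card ?S = card {xs \<in> ?S. P xs} + card {xs \<in> ?S. \<not> P xs}" .
  moreover have "real (card ?S) = fact (card X)" using X by simp
  ultimately have "real (card {xs \<in> ?S. P xs}) \<ge> (1 - e) * fact (card X)"
    using bad by (simp add: algebra_simps)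
  then have "1 - e \<le> real (card {xs \<in> ?S. P xs}) / fact (card X)"
    by (simp add: field_simps)
  moreover have "measure_pmf.prob (pmf_of_set ?S) {xs. P xs}
      = real (card {xs \<in> ?S. P xs}) / fact (card X)"
    using X by (simp add: measure_pmf_of_set Int_def conj_commute)
  ultimately show ?thesis by simp
qed

lemma permutations_of_set_take_drop:
  assumes xs: "xs \<in> permutations_of_set W" and W: "finite W" and s: "s \<le> card W"
  shows "set (take s xs) \<subseteq> W" "card (set (take s xs)) = s"
    "take s xs \<in> permutations_of_set (set (take s xs))"
    "drop s xs \<in> permutations_of_set (W - set (take s xs))"
proof -
  have d: "distinct xs" and sW: "set xs = W" using xs by (auto simp: permutations_of_set_def)
  have "set (take s xs) \<inter> set (drop s xs) = {}"
    using set_take_disj_set_drop_if_distinct[OF d, of s s] by simp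
  moreover have "set (take s xs) \<union> set (drop s xs) = W"
    using sW by (metis append_take_drop_id set_append)
  ultimately have "set (drop s xs) = W - set (take s xs)" by blast
  then show "take s xs \<in> permutations_of_set (set (take s xs))"
    "drop s xs \<in> permutations_of_set (W - set (take s xs))"
    using d by (auto simp: permutations_of_set_def)
  show "set (take s xs) \<subseteq> W" using sW set_take_subset by metis
  show "card (set (take s xs)) = s"
    using d s length_finite_permutations_of_set[OF xs] by (simp add: distinct_card)
qed

lemma card_permutations_split:
  assumes W: "finite W" and s: "s \<le> card W"
  shows "card {xs \<in> permutations_of_set W. P (take s xs) (drop s xs)} =
    (\<Sum>A\<in>{A. A \<subseteq> W \<and> card A = s}.
       card {(us, vs) \<in> permutations_of_set A \<times> permutations_of_set (W - A). P us vs})"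
proof -
  let ?K = "{A. A \<subseteq> W \<and> card A = s}"
  let ?S = "\<lambda>A. {(us, vs) \<in> permutations_of_set A \<times> permutations_of_set (W - A). P us vs}"
  have len: "length us = s" if "us \<in> permutations_of_set A" "A \<in> ?K" for us A
    using that W by (metis (mono_tags) length_finite_permutations_of_set mem_Collect_eq)
  have "bij_betw (\<lambda>xs. (set (take s xs), take s xs, drop s xs))
          {xs \<in> permutations_of_set W. P (take s xs) (drop s xs)} (SIGMA A:?K. ?S A)"
    by (rule bij_betw_byWitness[where f' = "\<lambda>(A, us, vs). us @ vs"])
       (use permutations_of_set_take_drop[OF _ W s] in \<open>fastforce simp: permutations_of_set_def len\<close>)+
  then have "card {xs \<in> permutations_of_set W. P (take s xs) (drop s xs)} = card (SIGMA A:?K. ?S A)"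
    by (rule bij_betw_same_card)
  also have "\<dots> = (\<Sum>A\<in>?K. card (?S A))"
    using W
    by (intro card_SigmaI) (auto intro: finite_subset[of _ "permutations_of_set _ \<times> permutations_of_set _"])
  finally show ?thesis .
qed

lemma fact_mult_fact_mult_binomial:
  "s \<le> n \<Longrightarrow> fact s * fact (n - s) * real (n choose s) = fact n"
  by (metis binomial_fact_lemma of_nat_fact of_nat_mult)

lemma sum_subsets_le_fact:
  fixes f :: "'a set \<Rightarrow> real"
  assumes W: "finite W" "s \<le> card W"
    and f: "\<And>A. A \<subseteq> W \<Longrightarrow> card A = s \<Longrightarrow> f A \<le> \<epsilon> * (fact s * fact (card W - s))"
  shows "(\<Sum>A\<in>{A. A \<subseteq> W \<and> card A = s}. f A) \<le> \<epsilon> * fact (card W)"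
proof -
  have "(\<Sum>A\<in>{A. A \<subseteq> W \<and> card A = s}. f A)
      \<le> (\<Sum>A\<in>{A. A \<subseteq> W \<and> card A = s}. \<epsilon> * (fact s * fact (card W - s)))"
    using f by (intro sum_mono) auto
  also have "\<dots> = \<epsilon> * (fact s * fact (card W - s) * real (card W choose s))"
    using W by (simp add: n_subsets)
  finally show ?thesis using fact_mult_fact_mult_binomial[OF W(2)] by simp
qed

lemma card_permutations_prefix_set_suffix_le:
  assumes W: "finite W" "s \<le> card W"
    and b: "\<And>A. A \<subseteq> W \<Longrightarrow> card A = s \<Longrightarrow>
          real (card {vs \<in> permutations_of_set (W - A). \<Phi> A vs}) \<le> \<epsilon> * fact (card W - s)"
  shows "real (card {xs \<in> permutations_of_set W. \<Phi> (set (take s xs)) (drop s xs)}) \<le> \<epsilon> * fact (card W)"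
  using card_permutations_split[OF W, of "\<lambda>us vs. \<Phi> (set us) vs"]
proof (simp only: of_nat_sum, intro sum_subsets_le_fact[OF W])
  fix A assume A: "A \<subseteq> W" "card A = s"
  then have "finite A" using W(1) finite_subset by blast
  have "{(us, vs) \<in> permutations_of_set A \<times> permutations_of_set (W - A). \<Phi> (set us) vs}
      = permutations_of_set A \<times> {vs \<in> permutations_of_set (W - A). \<Phi> A vs}"
    by (auto simp: permutations_of_set_def)
  then show "real (card {(us, vs) \<in> permutations_of_set A \<times> permutations_of_set (W - A).
                \<Phi> (set us) vs}) \<le> \<epsilon> * (fact s * fact (card W - s))"
    using b[OF A] \<open>finite A\<close> A by (simp add: card_cartesian_product mult.left_commute)
qed

lemma card_permutations_prefix_le:
  assumes W: "finite W" "s \<le> card W"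
    and b: "\<And>A. A \<subseteq> W \<Longrightarrow> card A = s \<Longrightarrow>
          real (card {us \<in> permutations_of_set A. \<Psi> us}) \<le> \<epsilon> * fact s"
  shows "real (card {xs \<in> permutations_of_set W. \<Psi> (take s xs)}) \<le> \<epsilon> * fact (card W)"
  using card_permutations_split[OF W, of "\<lambda>us vs. \<Psi> us"]
proof (simp only: of_nat_sum, intro sum_subsets_le_fact[OF W])
  fix A assume A: "A \<subseteq> W" "card A = s"
  then have "finite A" using W(1) finite_subset by blast
  have "{(us, vs) \<in> permutations_of_set A \<times> permutations_of_set (W - A). \<Psi> us}
      = {us \<in> permutations_of_set A. \<Psi> us} \<times> permutations_of_set (W - A)"
    by auto
  moreover have "card (W - A) = card W - s" using A W(1) by (simp add: card_Diff_subset finite_subset)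
  ultimately show "real (card {(us, vs) \<in> permutations_of_set A \<times> permutations_of_set (W - A).
                \<Psi> us}) \<le> \<epsilon> * (fact s * fact (card W - s))"
    using b[OF A] \<open>finite A\<close> A W(1) by (simp add: card_cartesian_product mult_right_mono)
qed

lemma card_permutations_prefix_set:
  assumes W: "finite W" "s \<le> card W"
  shows "real (card {xs \<in> permutations_of_set W. \<Psi> (set (take s xs))})
       = fact s * fact (card W - s) * real (card {A. A \<subseteq> W \<and> card A = s \<and> \<Psi> A})"
proof -
  have pairs: "card {(us, vs) \<in> permutations_of_set A \<times> permutations_of_set (W - A). \<Psi> (set us)}
      = (if \<Psi> A then fact s * fact (card W - s) else 0)" if A: "A \<in> {A. A \<subseteq> W \<and> card A = s}" for A
  proof -
    have "finite A" "A \<subseteq> W" "card A = s" using A W(1) finite_subset by auto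
    have "{(us, vs) \<in> permutations_of_set A \<times> permutations_of_set (W - A). \<Psi> (set us)}
        = (if \<Psi> A then permutations_of_set A \<times> permutations_of_set (W - A) else {})"
      by (auto simp: permutations_of_set_def)
    moreover have "card (W - A) = card W - s"
      using \<open>finite A\<close> \<open>A \<subseteq> W\<close> \<open>card A = s\<close> by (simp add: card_Diff_subset)
    ultimately show ?thesis
      using \<open>finite A\<close> \<open>card A = s\<close> W(1) by (simp add: card_cartesian_product)
  qed
  have "card {xs \<in> permutations_of_set W. \<Psi> (set (take s xs))}
      = (\<Sum>A\<in>{A. A \<subseteq> W \<and> card A = s}. if \<Psi> A then fact s * fact (card W - s) else 0)"
    unfolding card_permutations_split[OF W, of "\<lambda>us vs. \<Psi> (set us)"] by (rule sum.cong[OF refl pairs])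
  also have "\<dots> = (\<Sum>A\<in>{A. A \<subseteq> W \<and> card A = s \<and> \<Psi> A}. fact s * fact (card W - s))"
  proof -
    have K: "{A \<in> {A. A \<subseteq> W \<and> card A = s}. \<Psi> A} = {A. A \<subseteq> W \<and> card A = s \<and> \<Psi> A}"
      by auto
    have "finite {A. A \<subseteq> W \<and> card A = s}" using W(1) by simp
    from sum.inter_filter[OF this, of "\<lambda>_. fact s * fact (card W - s)" \<Psi>, symmetric]
    show ?thesis unfolding K .
  qed
  finally show ?thesis by simp
qed

lemma card_permutations_prefix_set_le:
  assumes W: "finite W" "s \<le> card W"
    and b: "real (card {A. A \<subseteq> W \<and> card A = s \<and> \<Psi> A}) \<le> \<epsilon> * real (card W choose s)"
  shows "real (card {xs \<in> permutations_of_set W. \<Psi> (set (take s xs))}) \<le> \<epsilon> * fact (card W)"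
proof -
  have "real (card {xs \<in> permutations_of_set W. \<Psi> (set (take s xs))})
      \<le> fact s * fact (card W - s) * (\<epsilon> * real (card W choose s))"
    unfolding card_permutations_prefix_set[OF W] by (intro mult_left_mono b) auto
  then show ?thesis using fact_mult_fact_mult_binomial[OF W(2)] by (simp add: ac_simps)
qed

section \<open>Tail bounds for random subsets of fixed size\<close>

lemma sum_power_card_Pow:
  fixes v :: real
  assumes "finite Y"
  shows "(\<Sum>S\<in>Pow Y. v ^ card S) = (1 + v) ^ card Y"
proof -
  have "(1 + v) ^ card Y = (\<Prod>y\<in>Y. v + 1)" by (simp add: add.commute)
  also have "\<dots> = (\<Sum>S\<in>Pow Y. (\<Prod>y\<in>S. v) * (\<Prod>y\<in>Y - S. 1))"
    by (rule prod_add[OF assms])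
  finally show ?thesis by simp
qed

lemma binomial_diff_Suc_mult_le:
  fixes N s j :: nat
  assumes "j < s" "s \<le> N"
  shows "(N - Suc j choose (s - Suc j)) * N \<le> (N - j choose (s - j)) * s"
proof -
  have "Suc (N - Suc j) * (N - Suc j choose (s - Suc j)) =
        (Suc (N - Suc j) choose Suc (s - Suc j)) * Suc (s - Suc j)"
    by (rule Suc_times_binomial_eq)
  moreover have "Suc (N - Suc j) = N - j" "Suc (s - Suc j) = s - j" using assms by auto
  ultimately have pascal: "(N - j) * (N - Suc j choose (s - Suc j)) = (N - j choose (s - j)) * (s - j)"
    by simp
  have "s * j \<le> j * N" using assms by (simp add: mult.commute)
  moreover have "(s - j) * N + j * N = s * N" using assms by (simp add: add_mult_distrib[symmetric])
  moreover have "s * (N - j) + s * j = s * N" using assms by (simp add: add_mult_distrib2[symmetric])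
  ultimately have "(s - j) * N \<le> s * (N - j)" by linarith
  then have "(N - j) * ((N - Suc j choose (s - Suc j)) * N) \<le> (N - j) * ((N - j choose (s - j)) * s)"
    using pascal mult_left_mono[of "(s - j) * N" "s * (N - j)" "N - j choose (s - j)"]
    by (simp add: ac_simps)
  moreover have "N - j > 0" using assms by simp
  ultimately show ?thesis by simp
qed

lemma binomial_diff_mult_power_le:
  fixes N s j :: nat
  assumes "j \<le> s" "s \<le> N"
  shows "(N - j choose (s - j)) * N ^ j \<le> (N choose s) * s ^ j"
  using assms(1)
proof (induction j)
  case 0
  then show ?case by simp
next
  case (Suc j)
  have "(N - Suc j choose (s - Suc j)) * N ^ Suc j = ((N - Suc j choose (s - Suc j)) * N) * N ^ j"
    by (simp add: ac_simps)
  also have "\<dots> \<le> ((N - j choose (s - j)) * s) * N ^ j"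
    using Suc.prems assms(2) by (intro mult_right_mono binomial_diff_Suc_mult_le) auto
  also have "\<dots> = s * ((N - j choose (s - j)) * N ^ j)" by (simp add: ac_simps)
  also have "\<dots> \<le> s * ((N choose s) * s ^ j)" using Suc by (intro mult_left_mono) auto
  also have "\<dots> = (N choose s) * s ^ Suc j" by (simp add: ac_simps)
  finally show ?case .
qed

lemma card_subsets_containing:
  assumes W: "finite W" and S: "S \<subseteq> W" and cs: "card S \<le> s"
  shows "card {A. A \<subseteq> W \<and> card A = s \<and> S \<subseteq> A} = (card W - card S) choose (s - card S)"
proof -
  have fS: "finite S" using W S finite_subset by auto
  have "bij_betw (\<lambda>A'. A' \<union> S) {A'. A' \<subseteq> W - S \<and> card A' = s - card S}
                                {A. A \<subseteq> W \<and> card A = s \<and> S \<subseteq> A}"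
  proof (rule bij_betw_byWitness[where f' = "\<lambda>A. A - S"])
    show "(\<lambda>A'. A' \<union> S) ` {A'. A' \<subseteq> W - S \<and> card A' = s - card S} \<subseteq> {A. A \<subseteq> W \<and> card A = s \<and> S \<subseteq> A}"
    proof clarify
      fix A' assume A': "A' \<subseteq> W - S" "card A' = s - card S"
      then have "finite A'" "A' \<inter> S = {}" using W finite_subset by auto
      then show "A' \<union> S \<subseteq> W \<and> card (A' \<union> S) = s \<and> S \<subseteq> A' \<union> S"
        using A' S cs fS by (auto simp: card_Un_disjoint)
    qed
    show "(\<lambda>A. A - S) ` {A. A \<subseteq> W \<and> card A = s \<and> S \<subseteq> A} \<subseteq> {A'. A' \<subseteq> W - S \<and> card A' = s - card S}"
      using fS by (auto simp: card_Diff_subset)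
  qed auto
  then have "card {A. A \<subseteq> W \<and> card A = s \<and> S \<subseteq> A} = card {A'. A' \<subseteq> W - S \<and> card A' = s - card S}"
    by (simp add: bij_betw_same_card)
  also have "\<dots> = card (W - S) choose (s - card S)" using W by (simp add: n_subsets)
  finally show ?thesis using S fS by (simp add: card_Diff_subset)
qed

lemma card_subsets_containing_le:
  assumes W: "finite W" and S: "S \<subseteq> W" and s: "s \<le> card W"
  shows "real (card {A. A \<subseteq> W \<and> card A = s \<and> S \<subseteq> A}) \<le>
         real (card W choose s) * (real s / real (card W)) ^ card S"
proof (cases "card S \<le> s")
  case False
  have "{A. A \<subseteq> W \<and> card A = s \<and> S \<subseteq> A} = {}"
    using W False by (auto dest: card_mono[OF finite_subset])
  then show ?thesis by (simp only: card.empty) simp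
next
  case True
  let ?N = "card W" and ?j = "card S"
  show ?thesis
  proof (cases "?N = 0")
    case True
    then show ?thesis using card_subsets_containing[OF W S] \<open>?j \<le> s\<close> s by simp
  next
    case False
    have "real (?N - ?j choose (s - ?j)) * real ?N ^ ?j \<le> real (?N choose s) * real s ^ ?j"
      using binomial_diff_mult_power_le[OF True s] by (metis of_nat_le_iff of_nat_mult of_nat_power)
    then have "real (?N - ?j choose (s - ?j)) \<le> real (?N choose s) * real s ^ ?j / real ?N ^ ?j"
      using False by (simp add: field_simps)
    then show ?thesis using card_subsets_containing[OF W S True] by (simp add: power_divide)
  qed
qed

text \<open>The generating function of the hypergeometric variable \<open>card (B \<inter> A)\<close> is dominated by
  that of the binomial variable with the same mean; this is what makes Chernoff-type bounds
  available for samples without replacement.\<close>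

lemma sum_power_card_Int_subsets_le:
  fixes u :: real
  assumes W: "finite W" and B: "B \<subseteq> W" and s: "s \<le> card W" and u: "u \<ge> 0"
  shows "(\<Sum>A\<in>{A. A \<subseteq> W \<and> card A = s}. (1 + u) ^ card (B \<inter> A)) \<le>
         real (card W choose s) * (1 + u * real s / real (card W)) ^ card B"
proof -
  let ?K = "{A. A \<subseteq> W \<and> card A = s}"
  let ?sup = "\<lambda>S. {A. A \<subseteq> W \<and> card A = s \<and> S \<subseteq> A}"
  have fB: "finite B" using W B finite_subset by auto
  have fK: "finite ?K" using W by auto
  have "(\<Sum>A\<in>?K. (1 + u) ^ card (B \<inter> A)) = (\<Sum>A\<in>?K. \<Sum>S\<in>Pow B. if S \<subseteq> A then u ^ card S else 0)"
  proof (rule sum.cong[OF refl])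
    fix A
    have "{S \<in> Pow B. S \<subseteq> A} = Pow (B \<inter> A)" by auto
    then have "(1 + u) ^ card (B \<inter> A) = (\<Sum>S\<in>{S \<in> Pow B. S \<subseteq> A}. u ^ card S)"
      using sum_power_card_Pow[of "B \<inter> A" u] fB by simp
    also have "\<dots> = (\<Sum>S\<in>Pow B. if S \<subseteq> A then u ^ card S else 0)"
      using fB by (intro sum.inter_filter) simp
    finally show "(1 + u) ^ card (B \<inter> A) = (\<Sum>S\<in>Pow B. if S \<subseteq> A then u ^ card S else 0)" .
  qed
  also have "\<dots> = (\<Sum>S\<in>Pow B. \<Sum>A\<in>?K. if S \<subseteq> A then u ^ card S else 0)"
    by (rule sum.swap)
  also have "\<dots> = (\<Sum>S\<in>Pow B. u ^ card S * real (card (?sup S)))"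
  proof (rule sum.cong[OF refl])
    fix S
    have K: "{A \<in> ?K. S \<subseteq> A} = ?sup S" by auto
    from sum.inter_filter[OF fK, of "\<lambda>_. u ^ card S" "\<lambda>A. S \<subseteq> A", symmetric]
    show "(\<Sum>A\<in>?K. if S \<subseteq> A then u ^ card S else 0) = u ^ card S * real (card (?sup S))"
      unfolding K by simp
  qed
  also have "\<dots> \<le> (\<Sum>S\<in>Pow B. u ^ card S * (real (card W choose s) * (real s / real (card W)) ^ card S))"
    using B u by (intro sum_mono mult_left_mono card_subsets_containing_le[OF W _ s]) auto
  also have "\<dots> = real (card W choose s) * (\<Sum>S\<in>Pow B. (u * real s / real (card W)) ^ card S)"
    unfolding sum_distrib_left by (intro sum.cong refl) (simp add: power_mult_distrib power_divide)
  also have "\<dots> = real (card W choose s) * (1 + u * real s / real (card W)) ^ card B"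
    using fB by (simp add: sum_power_card_Pow)
  finally show ?thesis .
qed

lemma ln_three_halves_ge: "2/5 \<le> ln (3/2::real)"
proof -
  have "exp (1/40::real) = 1 / exp (-(1/40))" by (simp add: exp_minus inverse_eq_divide)
  also have "\<dots> \<le> 1 / (39/40)"
    using exp_ge_add_one_self[of "-(1/40)::real"] by (intro divide_left_mono) auto
  finally have "exp (1/40::real) \<le> 40/39" by simp
  have "exp (2/5::real) = exp (1/40) ^ 16" using exp_of_nat_mult[of 16 "1/40::real"] by simp
  also have "\<dots> \<le> (40/39) ^ 16" by (intro power_mono \<open>exp (1/40) \<le> 40/39\<close>) simp
  also have "\<dots> \<le> (3/2::real)" by (simp add: power_divide)
  finally show ?thesis using ln_le_cancel_iff[of "exp (2/5)" "3/2::real"] by simp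
qed

lemma power_one_plus_le_exp:
  fixes x :: real
  assumes "x \<ge> -1"
  shows "(1 + x) ^ m \<le> exp (real m * x)"
proof -
  have "(1 + x) ^ m \<le> exp x ^ m"
    using assms by (intro power_mono) (auto simp: exp_ge_add_one_self add.commute)
  then show ?thesis by (simp add: exp_of_nat_mult)
qed

lemma mult_exp_le_imp_le:
  fixes x y a b :: real
  assumes "x * exp a \<le> y * exp b"
  shows "x \<le> y * exp (b - a)"
proof -
  have "x = x * exp a / exp a" by simp
  also have "\<dots> \<le> y * exp b / exp a" using assms by (intro divide_right_mono) auto
  finally show ?thesis by (simp add: exp_diff)
qed

lemma card_subsets_Int_ge_mult_le:
  fixes u t :: real
  assumes W: "finite W" and B: "B \<subseteq> W" and s: "s \<le> card W" and u: "u \<ge> 0"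
  shows "real (card {A. A \<subseteq> W \<and> card A = s \<and> t \<le> real (card (B \<inter> A))}) * exp (t * ln (1 + u))
       \<le> real (card W choose s) * (1 + u * real s / real (card W)) ^ card B"
proof -
  let ?U = "{A. A \<subseteq> W \<and> card A = s \<and> t \<le> real (card (B \<inter> A))}"
  have "exp (t * ln (1 + u)) \<le> (1 + u) ^ card (B \<inter> A)" if "A \<in> ?U" for A
  proof -
    have "exp (t * ln (1 + u)) \<le> exp (real (card (B \<inter> A)) * ln (1 + u))"
      using that u by (intro exp_le_cancel_iff[THEN iffD2] mult_right_mono) auto
    also have "\<dots> = (1 + u) ^ card (B \<inter> A)" using u by (simp add: exp_of_nat_mult)
    finally show ?thesis .
  qed
  then have "real (card ?U) * exp (t * ln (1 + u)) \<le> (\<Sum>A\<in>?U. (1 + u) ^ card (B \<inter> A))"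
    using sum_mono[of ?U "\<lambda>_. exp (t * ln (1 + u))"] by simp
  also have "\<dots> \<le> (\<Sum>A\<in>{A. A \<subseteq> W \<and> card A = s}. (1 + u) ^ card (B \<inter> A))"
    using W u by (intro sum_mono2) auto
  also have "\<dots> \<le> real (card W choose s) * (1 + u * real s / real (card W)) ^ card B"
    by (rule sum_power_card_Int_subsets_le[OF W B s u])
  finally show ?thesis .
qed

lemma card_subsets_complement:
  assumes "finite W" "s \<le> card W"
  shows "card {A. A \<subseteq> W \<and> card A = s \<and> P A} = card {A. A \<subseteq> W \<and> card A = card W - s \<and> P (W - A)}"
proof (rule bij_betw_same_card[of "\<lambda>A. W - A"], rule bij_betw_byWitness[where f' = "\<lambda>A. W - A"])
  show "(\<lambda>A. W - A) ` {A. A \<subseteq> W \<and> card A = s \<and> P A} \<subseteq> {A. A \<subseteq> W \<and> card A = card W - s \<and> P (W - A)}"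
    using assms by (auto simp: card_Diff_subset finite_subset double_diff)
  show "(\<lambda>A. W - A) ` {A. A \<subseteq> W \<and> card A = card W - s \<and> P (W - A)} \<subseteq> {A. A \<subseteq> W \<and> card A = s \<and> P A}"
    using assms by (auto simp: card_Diff_subset finite_subset)
qed auto

lemma card_subsets_upper_tail:
  assumes W: "finite W" and B: "B \<subseteq> W" and s: "s \<le> card W"
  defines "\<mu> \<equiv> real s * real (card B) / real (card W)"
  shows "real (card {A. A \<subseteq> W \<and> card A = s \<and> 3/2 * \<mu> \<le> real (card (B \<inter> A))})
         \<le> exp (-\<mu>/10) * real (card W choose s)"
proof -
  let ?U = "{A. A \<subseteq> W \<and> card A = s \<and> 3/2 * \<mu> \<le> real (card (B \<inter> A))}"
  have "\<mu> \<ge> 0" unfolding \<mu>_def by simp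
  have "-1 \<le> 1/2 * real s / real (card W)" by (rule order_trans[of _ 0]) simp_all
  moreover have "real (card B) * (1/2 * real s / real (card W)) = \<mu> / 2"
    unfolding \<mu>_def by (simp add: field_simps)
  ultimately have exp: "(1 + 1/2 * real s / real (card W)) ^ card B \<le> exp (\<mu> / 2)"
    using power_one_plus_le_exp[of "1/2 * real s / real (card W)" "card B"] by (simp only:)
  have "real (card ?U) * exp (3/2 * \<mu> * ln (3/2))
      \<le> real (card W choose s) * (1 + 1/2 * real s / real (card W)) ^ card B"
    using card_subsets_Int_ge_mult_le[OF W B s, of "1/2" "3/2 * \<mu>"] by simp
  also have "\<dots> \<le> real (card W choose s) * exp (\<mu> / 2)"
    using exp by (intro mult_left_mono) auto
  finally have "real (card ?U) \<le> real (card W choose s) * exp (\<mu> / 2 - 3/2 * \<mu> * ln (3/2))"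
    by (rule mult_exp_le_imp_le)
  also have "\<dots> \<le> real (card W choose s) * exp (-\<mu>/10)"
    using mult_left_mono[OF ln_three_halves_ge, of "3/2 * \<mu>"] \<open>\<mu> \<ge> 0\<close> by (intro mult_left_mono) auto
  finally show ?thesis by (simp add: mult.commute)
qed

lemma card_subsets_Int_le_complement:
  assumes W: "finite W" and B: "B \<subseteq> W" and s: "s \<le> card W"
  shows "card {A. A \<subseteq> W \<and> card A = s \<and> real (card (B \<inter> A)) \<le> x}
       = card {A. A \<subseteq> W \<and> card A = card W - s \<and> real (card B) - x \<le> real (card (B \<inter> A))}"
proof -
  have fB: "finite B" using B W finite_subset by blast
  have diff: "real (card (B \<inter> (W - A))) = real (card B) - real (card (B \<inter> A))" for A
  proof -
    have "B \<inter> (W - A) = B - A" using B by auto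
    then have "card (B \<inter> (W - A)) = card B - card (B \<inter> A)" using fB by (simp add: card_Diff_subset_Int)
    moreover have "card (B \<inter> A) \<le> card B" using fB by (simp add: card_mono)
    ultimately show ?thesis by simp
  qed
  have "card {A. A \<subseteq> W \<and> card A = s \<and> real (card (B \<inter> A)) \<le> x}
      = card {A. A \<subseteq> W \<and> card A = card W - s \<and> real (card (B \<inter> (W - A))) \<le> x}"
    by (rule card_subsets_complement[OF W s])
  also have "{A. A \<subseteq> W \<and> card A = card W - s \<and> real (card (B \<inter> (W - A))) \<le> x}
      = {A. A \<subseteq> W \<and> card A = card W - s \<and> real (card B) - x \<le> real (card (B \<inter> A))}"
    using diff by (intro Collect_cong) auto
  finally show ?thesis .
qed

lemma power_one_plus_complement_le:
  assumes "s \<le> n" "0 < n"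
  shows "(1 + real (n - s) / real n) ^ m \<le> 2 ^ m * exp (- (real s * real m / real n) / 2)"
proof -
  let ?p = "real s / real n"
  have "1 + real (n - s) / real n = 2 * (1 + - (?p / 2))"
    using assms by (simp add: of_nat_diff field_simps)
  then have "(1 + real (n - s) / real n) ^ m = 2 ^ m * (1 + - (?p / 2)) ^ m"
    by (simp only: power_mult_distrib)
  also have "(1 + - (?p / 2)) ^ m \<le> exp (real m * - (?p / 2))"
    using assms by (intro power_one_plus_le_exp) (simp add: divide_le_eq_1)
  finally show ?thesis by (simp add: mult.commute)
qed

lemma card_subsets_lower_tail:
  assumes W: "finite W" and B: "B \<subseteq> W" and s: "s \<le> card W" and N: "card W > 0"
  defines "\<mu> \<equiv> real s * real (card B) / real (card W)"
  shows "real (card {A. A \<subseteq> W \<and> card A = s \<and> real (card (B \<inter> A)) \<le> \<mu> / 2})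
         \<le> exp (-\<mu>/10) * real (card W choose s)"
proof -
  let ?L = "{A. A \<subseteq> W \<and> card A = s \<and> real (card (B \<inter> A)) \<le> \<mu> / 2}"
  let ?m = "card B"
  have "\<mu> \<ge> 0" unfolding \<mu>_def by simp
  have "real (card ?L) * exp ((real ?m - \<mu> / 2) * ln 2)
      \<le> real (card W choose s) * (1 + real (card W - s) / real (card W)) ^ ?m"
    using card_subsets_Int_ge_mult_le[OF W B _ zero_le_one, of "card W - s" "real ?m - \<mu> / 2"]
      card_subsets_Int_le_complement[OF W B s, of "\<mu> / 2"] binomial_symmetric[OF s]
    by simp
  also have "\<dots> \<le> real (card W choose s) * (2 ^ ?m * exp (- \<mu> / 2))"
    using power_one_plus_complement_le[OF s N, of ?m] unfolding \<mu>_def by (intro mult_left_mono) auto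
  finally have bound: "real (card ?L) * exp ((real ?m - \<mu> / 2) * ln 2)
      \<le> real (card W choose s) * (2 ^ ?m * exp (- \<mu> / 2))" .
  have "exp ((real ?m - \<mu> / 2) * ln 2) = exp (real ?m * ln 2) / exp (\<mu> / 2 * ln 2)"
    by (simp only: left_diff_distrib exp_diff)
  also have "exp (real ?m * ln 2) = 2 ^ ?m" by (simp add: exp_of_nat_mult)
  finally have "real (card ?L) * exp ((real ?m - \<mu> / 2) * ln 2)
      = (real (card ?L) * exp (- (\<mu> / 2 * ln 2))) * 2 ^ ?m"
    by (simp only: exp_minus divide_inverse ac_simps)
  then have "(real (card ?L) * exp (- (\<mu> / 2 * ln 2))) * 2 ^ ?m
      \<le> (real (card W choose s) * exp (- \<mu> / 2)) * 2 ^ ?m"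
    using bound by (simp only: ac_simps)
  then have "real (card ?L) * exp (- (\<mu> / 2 * ln 2)) \<le> real (card W choose s) * exp (- \<mu> / 2)"
    by (rule mult_right_le_imp_le) simp
  then have "real (card ?L) \<le> real (card W choose s) * exp (- \<mu> / 2 - - (\<mu> / 2 * ln 2))"
    by (rule mult_exp_le_imp_le)
  also have "\<dots> \<le> real (card W choose s) * exp (-\<mu>/10)"
    using mult_left_mono[OF ln2_le_25_over_36, of "\<mu> / 2"] \<open>\<mu> \<ge> 0\<close> by (intro mult_left_mono) auto
  finally show ?thesis by (simp add: mult.commute)
qed

lemma card_subsets_not_well_rep:
  assumes W: "finite W" and B: "B \<subseteq> W" "B \<noteq> {}" and s: "s \<le> card W"
  defines "\<mu> \<equiv> real s * real (card B) / real (card W)"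
  shows "real (card {A. A \<subseteq> W \<and> card A = s \<and> \<not> well_rep W A B})
         \<le> 2 * exp (-\<mu>/10) * real (card W choose s)"
proof -
  let ?U = "{A. A \<subseteq> W \<and> card A = s \<and> 3/2 * \<mu> \<le> real (card (B \<inter> A))}"
  let ?L = "{A. A \<subseteq> W \<and> card A = s \<and> real (card (B \<inter> A)) \<le> \<mu> / 2}"
  have fB: "finite B" using W B finite_subset by auto
  have N: "card W > 0" using W B by (metis card_gt_0_iff finite_subset subset_empty)
  have Bpos: "real (card B) > 0" using fB B by (simp add: card_gt_0_iff)
  have "A \<in> ?U \<union> ?L" if A: "A \<subseteq> W" "card A = s" "\<not> well_rep W A B" for A
  proof -
    let ?r = "real s / real (card W)" and ?q = "real (card (B \<inter> A)) / real (card B)"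
    have "\<not> (?r / 2 \<le> ?q \<and> ?q \<le> 3/2 * ?r)" using A unfolding well_rep_def Let_def by simp
    moreover have "?r / 2 \<le> ?q \<longleftrightarrow> \<mu> / 2 \<le> real (card (B \<inter> A))"
      using Bpos unfolding \<mu>_def by (simp add: field_simps)
    moreover have "?q \<le> 3/2 * ?r \<longleftrightarrow> real (card (B \<inter> A)) \<le> 3/2 * \<mu>"
      using Bpos unfolding \<mu>_def by (simp add: field_simps)
    ultimately show ?thesis using A by auto
  qed
  then have "{A. A \<subseteq> W \<and> card A = s \<and> \<not> well_rep W A B} \<subseteq> ?U \<union> ?L" by blast
  then have "card {A. A \<subseteq> W \<and> card A = s \<and> \<not> well_rep W A B} \<le> card (?U \<union> ?L)"
    using W by (intro card_mono) auto
  then have "card {A. A \<subseteq> W \<and> card A = s \<and> \<not> well_rep W A B} \<le> card ?U + card ?L"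
    using card_Un_le[of ?U ?L] by linarith
  then have "real (card {A. A \<subseteq> W \<and> card A = s \<and> \<not> well_rep W A B}) \<le> real (card ?U) + real (card ?L)"
    by linarith
  also have "\<dots> \<le> exp (-\<mu>/10) * real (card W choose s) + exp (-\<mu>/10) * real (card W choose s)"
    using card_subsets_upper_tail[OF W B(1) s] card_subsets_lower_tail[OF W B(1) s N]
    unfolding \<mu>_def by (intro add_mono) auto
  finally show ?thesis by (simp add: ac_simps)
qed

section \<open>Well-represented windows of a random ordering\<close>

lemma card_permutations_rotate:
  "card {xs \<in> permutations_of_set W. P (rotate n xs)} = card {xs \<in> permutations_of_set W. P xs}"
proof -
  let ?S = "permutations_of_set W"
  have inj: "inj_on (rotate n) ?S"
    unfolding rotate_def by (rule inj_on_subset[OF inj_fn[OF inj_rotate1]]) simp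
  have "rotate n ` ?S \<subseteq> ?S" by (auto simp: permutations_of_set_def)
  then have onto: "rotate n ` ?S = ?S" by (intro endo_inj_surj inj finite_permutations_of_set)
  have "rotate n ` {xs \<in> ?S. P (rotate n xs)} = {ys \<in> rotate n ` ?S. P ys}" by auto
  then have "rotate n ` {xs \<in> ?S. P (rotate n xs)} = {xs \<in> ?S. P xs}" by (simp only: onto)
  moreover have "inj_on (rotate n) {xs \<in> ?S. P (rotate n xs)}"
    using inj by (rule inj_on_subset) simp
  ultimately show ?thesis using card_image by fastforce
qed

lemma take_drop_eq_take_rotate:
  assumes "a + g \<le> length xs"
  shows "take g (drop a xs) = take g (rotate a xs)"
proof (cases "a < length xs")
  case True
  then show ?thesis using assms by (simp add: rotate_drop_take)
next
  case False
  then show ?thesis using assms by simp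
qed

lemma card_permutations_window:
  assumes "finite W" "a + g \<le> card W"
  shows "card {xs \<in> permutations_of_set W. \<Psi> (take g (drop a xs))}
       = card {xs \<in> permutations_of_set W. \<Psi> (take g xs)}"
proof -
  have "{xs \<in> permutations_of_set W. \<Psi> (take g (drop a xs))}
      = {xs \<in> permutations_of_set W. \<Psi> (take g (rotate a xs))}"
  proof (rule Collect_cong, rule conj_cong[OF refl])
    fix xs assume "xs \<in> permutations_of_set W"
    then have "a + g \<le> length xs" using assms(2) by (simp add: length_finite_permutations_of_set)
    then show "\<Psi> (take g (drop a xs)) = \<Psi> (take g (rotate a xs))"
      by (simp add: take_drop_eq_take_rotate)
  qed
  then show ?thesis using card_permutations_rotate[where P = "\<lambda>ys. \<Psi> (take g ys)"] by simp
qed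

lemma card_permutations_not_well_rep:
  assumes V: "finite V" and B: "B \<subseteq> V" "B \<noteq> {}" and s: "s \<le> card V"
    and L: "10 * L \<le> real s * real (card B) / real (card V)"
  shows "real (card {vs \<in> permutations_of_set V. \<not> well_rep V (set (take s vs)) B})
       \<le> 2 * exp (-L) * fact (card V)"
proof (rule card_permutations_prefix_set_le[OF V s])
  have "real (card {A. A \<subseteq> V \<and> card A = s \<and> \<not> well_rep V A B}) \<le>
     2 * exp (-(real s * real (card B) / real (card V))/10) * real (card V choose s)"
    by (rule card_subsets_not_well_rep[OF V B s])
  also have "\<dots> \<le> 2 * exp (-L) * real (card V choose s)"
  proof -
    have "-(real s * real (card B) / real (card V))/10 \<le> -L"
      using divide_right_mono[OF L, of 10] by simp
    then show ?thesis by (intro mult_right_mono mult_left_mono) auto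
  qed
  finally show "real (card {A. A \<subseteq> V \<and> card A = s \<and> \<not> well_rep V A B})
      \<le> 2 * exp (-L) * real (card V choose s)" .
qed

lemma geometric_sum_exp_le:
  fixes L :: real
  assumes L: "64 \<le> exp L"
  shows "(\<Sum>j<n. 2 * exp (- (L * (real j + 2) / 2))) \<le> 16/7 * exp (-L)"
proof -
  define x where "x = exp (- L / 2)"
  have "exp (L/2) ^ 2 \<ge> 8 ^ 2"
    using L by (simp add: exp_of_nat_mult[symmetric])
  then have "exp (L/2) \<ge> 8" by (rule power2_le_imp_le) simp
  then have x: "0 < x" "x \<le> 1/8"
    unfolding x_def by (auto simp: exp_minus field_simps)
  have summand: "2 * exp (- (L * (real j + 2) / 2)) = 2 * exp (-L) * x ^ j" for j
  proof -
    have "exp (-L) * x ^ j = exp (-L + real j * (- L / 2))"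
      unfolding x_def by (simp only: exp_of_nat_mult exp_add)
    also have "-L + real j * (- L / 2) = - (L * (real j + 2) / 2)" by (simp add: algebra_simps)
    finally show ?thesis by simp
  qed
  have "(\<Sum>j<n. 2 * exp (- (L * (real j + 2) / 2))) = (\<Sum>j<n. 2 * exp (-L) * x ^ j)"
    by (rule sum.cong[OF refl summand])
  also have "\<dots> = 2 * exp (-L) * (\<Sum>j<n. x ^ j)"
    by (rule sum_distrib_left[symmetric])
  also have "(\<Sum>j<n. x ^ j) = (1 - x ^ n) / (1 - x)" using x by (simp add: sum_gp_strict)
  also have "\<dots> \<le> 1 / (1 - x)" using x by (intro divide_right_mono) auto
  also have "\<dots> \<le> 8/7" using x by (simp add: field_simps)
  finally show ?thesis by (simp add: mult_left_mono)
qed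

lemma card_permutations_not_bins_well_rep:
  assumes V: "finite V" and WV: "W \<subseteq> V" and Bs: "linear_bin_division \<rho> z W T Bs"
    and zW: "z \<le> real (card W)" and z0: "0 < z" and s: "s \<le> card V"
    and L: "10 * L \<le> real s * z / real (card V)" and L64: "64 \<le> exp L"
  shows "real (card {vs \<in> permutations_of_set V. \<not> bins_well_rep V (set (take s vs)) Bs})
       \<le> 16/7 * exp (-L) * fact (card V)"
proof -
  have union: "\<Union>(set Bs) = W"
    and sizes: "\<And>i. i < length Bs \<Longrightarrow> z * (real i + 2) / 2 \<le> real (card (Bs!i))"
    using Bs zW unfolding linear_bin_division_def by auto
  have bin: "real (card {vs \<in> permutations_of_set V. \<not> well_rep V (set (take s vs)) (Bs!j)})
      \<le> 2 * exp (- (L * (real j + 2) / 2)) * fact (card V)" if j: "j < length Bs" for j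
  proof -
    have "0 < z * (real j + 2) / 2" using z0 by simp
    then have ne: "Bs!j \<noteq> {}" using sizes[OF j] by auto
    have "10 * (L * (real j + 2) / 2) \<le> (real s * z / real (card V)) * ((real j + 2) / 2)"
      using mult_right_mono[OF L, of "(real j + 2) / 2"] by simp
    also have "\<dots> = real s * (z * (real j + 2) / 2) / real (card V)" by simp
    also have "\<dots> \<le> real s * real (card (Bs!j)) / real (card V)"
      by (intro divide_right_mono mult_left_mono sizes[OF j]) auto
    moreover have "Bs!j \<subseteq> V" using nth_mem[OF j] union WV by blast
    ultimately show ?thesis
      using card_permutations_not_well_rep[OF V _ ne s, of "L * (real j + 2) / 2"] by simp
  qed
  have "{vs \<in> permutations_of_set V. \<not> bins_well_rep V (set (take s vs)) Bs}
      = {vs \<in> permutations_of_set V. \<exists>j<length Bs. \<not> well_rep V (set (take s vs)) (Bs!j)}"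
    unfolding bins_well_rep_def by (force simp: in_set_conv_nth)
  moreover have "real (card {vs \<in> permutations_of_set V. \<exists>j<length Bs. \<not> well_rep V (set (take s vs)) (Bs!j)})
      \<le> (\<Sum>j<length Bs. 2 * exp (- (L * (real j + 2) / 2)) * fact (card V))"
    by (rule card_Collect_ex_less_le) (rule bin)
  ultimately have "real (card {vs \<in> permutations_of_set V. \<not> bins_well_rep V (set (take s vs)) Bs})
      \<le> (\<Sum>j<length Bs. 2 * exp (- (L * (real j + 2) / 2)) * fact (card V))"
    by simp
  also have "\<dots> = (\<Sum>j<length Bs. 2 * exp (- (L * (real j + 2) / 2))) * fact (card V)"
    by (simp add: sum_distrib_right)
  also have "\<dots> \<le> 16/7 * exp (-L) * fact (card V)"
    by (intro mult_right_mono geometric_sum_exp_le L64) simp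
  finally show ?thesis .
qed

lemma bij_betw_far_rank:
  fixes \<rho> :: "'a::linorder \<Rightarrow> 'a \<Rightarrow> real"
  assumes S: "finite S"
  shows "bij_betw (\<lambda>x. card {y\<in>S. far_before \<rho> T y x}) S {..<card S}"
proof -
  let ?fb = "far_before \<rho> T"
  let ?rk = "\<lambda>x. card {y\<in>S. ?fb y x}"
  have irrefl: "\<not> ?fb x x" for x unfolding far_before_def by auto
  have trans: "?fb x y \<Longrightarrow> ?fb y z \<Longrightarrow> ?fb x z" for x y z unfolding far_before_def by auto
  have total: "x \<noteq> y \<Longrightarrow> ?fb x y \<or> ?fb y x" for x y unfolding far_before_def by auto
  have mono: "?rk x < ?rk y" if "?fb x y" "x \<in> S" for x y
  proof -
    have "{z\<in>S. ?fb z x} \<subset> {z\<in>S. ?fb z y}" using that trans irrefl by blast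
    then show ?thesis using S by (intro psubset_card_mono) auto
  qed
  have inj: "inj_on ?rk S"
  proof (rule inj_onI, rule ccontr)
    fix x y assume "x \<in> S" "y \<in> S" "?rk x = ?rk y" "x \<noteq> y"
    then show False using total[of x y] mono[of x y] mono[of y x] by auto
  qed
  have "?rk x < card S" if "x \<in> S" for x
  proof -
    have "{y\<in>S. ?fb y x} \<subset> S" using that irrefl by blast
    then show ?thesis using S by (intro psubset_card_mono) auto
  qed
  then have "?rk ` S \<subseteq> {..<card S}" by auto
  moreover have "card (?rk ` S) = card {..<card S}" using card_image[OF inj] by simp
  ultimately have "?rk ` S = {..<card S}" by (intro card_subset_eq) auto
  with inj show ?thesis by (simp add: bij_betw_def)
qed

lemma card_far:
  fixes \<rho> :: "'a::linorder \<Rightarrow> 'a \<Rightarrow> real"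
  assumes S: "finite S" and r: "r \<le> real (card S)"
  shows "card (far \<rho> r S T) = nat \<lceil>r\<rceil>"
proof -
  let ?rk = "\<lambda>x. card {y\<in>S. far_before \<rho> T y x}"
  let ?m = "nat \<lceil>r\<rceil>"
  have bij: "bij_betw ?rk S {..<card S}" by (rule bij_betw_far_rank[OF S])
  have m: "?m \<le> card S" using r by linarith
  have "?rk ` {x\<in>S. ?rk x < ?m} = {..<?m}"
  proof (intro equalityI subsetI)
    fix i assume "i \<in> {..<?m}"
    then have "i < card S" using m by (simp add: less_le_trans)
    then have "i \<in> ?rk ` S" using bij by (simp add: bij_betw_def)
    then show "i \<in> ?rk ` {x\<in>S. ?rk x < ?m}" using \<open>i \<in> {..<?m}\<close> by auto
  qed auto
  then have "bij_betw ?rk {x\<in>S. ?rk x < ?m} {..<?m}"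
    using bij unfolding bij_betw_def by (auto intro: inj_on_subset)
  then show ?thesis using r unfolding far_def by (simp add: bij_betw_same_card)
qed

lemma far_subset: "far \<rho> r S T \<subseteq> S"
  unfolding far_def by auto

section \<open>A point below the median among the first points of a set\<close>

lemma card_permutations_Cons:
  assumes "finite Q" "Q \<noteq> {}"
  shows "card {ps \<in> permutations_of_set Q. P ps}
       = (\<Sum>x\<in>Q. card {ps \<in> permutations_of_set (Q - {x}). P (x # ps)})"
proof -
  have "{ps \<in> permutations_of_set Q. P ps}
      = (\<Union>x\<in>Q. (\<lambda>ps. x # ps) ` {ps \<in> permutations_of_set (Q - {x}). P (x # ps)})"
    using permutations_of_set_nonempty[OF assms(2)] by auto
  also have "card \<dots> = (\<Sum>x\<in>Q. card ((\<lambda>ps. x # ps) ` {ps \<in> permutations_of_set (Q - {x}). P (x # ps)}))"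
    using assms(1) by (rule card_UN_disjoint) auto
  finally show ?thesis by (simp add: card_image)
qed

definition share :: "'a set \<Rightarrow> 'a set \<Rightarrow> real" where
  "share Bd D = (if D = {} then 1 else real (card Bd) / real (card D))"

lemma share_nonneg: "0 \<le> share Bd D"
  unfolding share_def by simp

lemma card_mult_share:
  assumes "finite D" "Bd \<subseteq> D"
  shows "real (card D) * share Bd D = real (card Bd)"
  using assms unfolding share_def by auto

lemma share_remove_le:
  assumes "finite D" "x \<in> Bd" "Bd \<subseteq> D"
  shows "share (Bd - {x}) (D - {x}) \<le> share Bd D"
proof (cases "D - {x} = {}")
  case True
  then have "D = {x}" "Bd = {x}" using assms by auto
  then show ?thesis unfolding share_def by simp
next
  case False
  have "finite Bd" using assms finite_subset by auto
  then have m: "card (D - {x}) = card D - 1" "card (Bd - {x}) = card Bd - 1"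
    using assms by auto
  obtain y where "y \<in> D - {x}" using False by auto
  then have "card {x, y} \<le> card D" using assms by (intro card_mono) auto
  then have "card D \<ge> 2" using \<open>y \<in> D - {x}\<close> by auto
  moreover have "card Bd \<le> card D" "card Bd \<ge> 1"
    using assms \<open>finite Bd\<close> by (auto simp: card_mono Suc_le_eq card_gt_0_iff)
  ultimately show ?thesis using False assms unfolding share_def m by (auto simp: field_simps of_nat_diff)
qed

lemma permutations_Cons_take_filter_subset:
  "{ps \<in> permutations_of_set (Q - {x}). set (take (Suc L) (filter (\<lambda>y. y \<in> D) (x # ps))) \<subseteq> Bd}
   = (if x \<notin> D then {ps \<in> permutations_of_set (Q - {x}). set (take (Suc L) (filter (\<lambda>y. y \<in> D) ps)) \<subseteq> Bd}
      else if x \<in> Bd then {ps \<in> permutations_of_set (Q - {x}).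
                              set (take L (filter (\<lambda>y. y \<in> D - {x}) ps)) \<subseteq> Bd - {x}}
      else {})"
proof -
  have "filter (\<lambda>y. y \<in> D) ps = filter (\<lambda>y. y \<in> D - {x}) ps"
    "x \<notin> set (take L (filter (\<lambda>y. y \<in> D - {x}) ps))"
    if "ps \<in> permutations_of_set (Q - {x})" for ps
    using that set_take_subset by (fastforce simp: permutations_of_set_def intro: filter_cong)+
  then show ?thesis by auto
qed

lemma sum_if_mem_subsets:
  fixes a b :: real
  assumes "finite Q" "D \<subseteq> Q" "Bd \<subseteq> D"
  shows "(\<Sum>x\<in>Q. if x \<notin> D then b else if x \<in> Bd then a else 0)
       = real (card Q - card D) * b + real (card Bd) * a"
proof -
  have fD: "finite D" using assms finite_subset by auto
  let ?f = "\<lambda>x. if x \<notin> D then b else if x \<in> Bd then a else 0"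
  have "(\<Sum>x\<in>Q. ?f x) = (\<Sum>x\<in>Q - D. ?f x) + (\<Sum>x\<in>D. ?f x)"
    by (rule sum.subset_diff[OF assms(2,1)])
  also have "(\<Sum>x\<in>Q - D. ?f x) = (\<Sum>x\<in>Q - D. b)" by (rule sum.cong) auto
  also have "(\<Sum>x\<in>D. ?f x) = (\<Sum>x\<in>D. if x \<in> Bd then a else 0)" by (rule sum.cong) auto
  also have "\<dots> = (\<Sum>x\<in>D \<inter> Bd. a)"
    by (rule sum.inter_restrict[symmetric, OF fD])
  finally show ?thesis
    using assms fD by (simp add: card_Diff_subset Int_absorb1)
qed

lemma card_permutations_Cons_take_filter_subset_le:
  assumes IH: "\<And>D' Bd' L. D' \<subseteq> Q - {x} \<Longrightarrow> Bd' \<subseteq> D' \<Longrightarrow>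
      real (card {ps \<in> permutations_of_set (Q - {x}). set (take L (filter (\<lambda>y. y \<in> D') ps)) \<subseteq> Bd'})
      \<le> share Bd' D' ^ L * fact (card (Q - {x}))"
    and Q: "finite Q" "D \<subseteq> Q" "Bd \<subseteq> D"
  shows "real (card {ps \<in> permutations_of_set (Q - {x}). set (take (Suc L) (filter (\<lambda>y. y \<in> D) (x # ps))) \<subseteq> Bd})
     \<le> (if x \<notin> D then share Bd D ^ Suc L else if x \<in> Bd then share Bd D ^ L else 0) * fact (card (Q - {x}))"
proof -
  have "real (card {ps \<in> permutations_of_set (Q - {x}). set (take L (filter (\<lambda>y. y \<in> D - {x}) ps)) \<subseteq> Bd - {x}})
      \<le> share Bd D ^ L * fact (card (Q - {x}))" if "x \<in> Bd"
  proof -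
    have "D - {x} \<subseteq> Q - {x}" "Bd - {x} \<subseteq> D - {x}" using Q by auto
    from IH[OF this, of L] share_nonneg show ?thesis
      using share_remove_le[OF finite_subset[OF Q(2,1)] that Q(3)]
      by (meson mult_right_mono order_trans power_mono fact_ge_zero)
  qed
  moreover have "D \<subseteq> Q - {x}" if "x \<notin> D" using that Q by auto
  ultimately show ?thesis
    using IH[OF _ Q(3), of "Suc L"] unfolding permutations_Cons_take_filter_subset by auto
qed

lemma card_permutations_take_filter_subset:
  assumes "finite Q" "D \<subseteq> Q" "Bd \<subseteq> D"
  shows "real (card {ps \<in> permutations_of_set Q. set (take L (filter (\<lambda>x. x \<in> D) ps)) \<subseteq> Bd})
     \<le> share Bd D ^ L * fact (card Q)"
  using assms
proof (induction "card Q" arbitrary: Q D Bd L)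
  case 0
  then have "Q = {}" "D = {}" by auto
  then show ?case by (simp add: share_def)
next
  case (Suc n)
  let ?P = "\<lambda>ps. set (take L (filter (\<lambda>x. x \<in> D) ps)) \<subseteq> Bd"
  let ?r = "share Bd D"
  show ?case
  proof (cases L)
    case 0
    have "card {ps \<in> permutations_of_set Q. ?P ps} \<le> card (permutations_of_set Q)"
      by (rule card_mono) auto
    then show ?thesis using 0 Suc.prems(1) by simp
  next
    case (Suc L')
    have "real (card {ps \<in> permutations_of_set Q. ?P ps})
        = (\<Sum>x\<in>Q. real (card {ps \<in> permutations_of_set (Q - {x}). ?P (x # ps)}))"
      using Suc.hyps(2) Suc.prems(1) by (subst card_permutations_Cons) auto
    also have "\<dots> \<le> (\<Sum>x\<in>Q. (if x \<notin> D then ?r ^ L else if x \<in> Bd then ?r ^ L' else 0) * fact n)"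
    proof (rule sum_mono)
      fix x assume "x \<in> Q"
      then have "n = card (Q - {x})" "finite (Q - {x})" using Suc.hyps(2) Suc.prems(1) by auto
      from card_permutations_Cons_take_filter_subset_le[OF Suc.hyps(1)[OF this] Suc.prems, of L']
      show "real (card {ps \<in> permutations_of_set (Q - {x}). ?P (x # ps)})
          \<le> (if x \<notin> D then ?r ^ L else if x \<in> Bd then ?r ^ L' else 0) * fact n"
        unfolding \<open>L = Suc L'\<close> \<open>n = card (Q - {x})\<close> .
    qed
    also have "\<dots> = (real (card Q - card D) * ?r ^ L + real (card D) * ?r ^ L) * fact n"
      using sum_if_mem_subsets[OF Suc.prems, of "?r ^ L" "?r ^ L'"] \<open>L = Suc L'\<close>
        card_mult_share[OF finite_subset[OF Suc.prems(2,1)] Suc.prems(3)]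
      by (simp add: sum_distrib_right[symmetric] mult.assoc)
    also have "\<dots> = ?r ^ L * fact (card Q)"
      using card_mono[OF Suc.prems(1,2)] by (simp add: algebra_simps of_nat_diff flip: Suc.hyps(2))
    finally show ?thesis .
  qed
qed

lemma card_below_median_le:
  fixes d :: "'a \<Rightarrow> real"
  assumes "finite D"
  shows "2 * card {x0\<in>D. \<not> real (card D) \<le> 2 * real (card {x\<in>D. d x0 \<le> d x})} \<le> card D"
proof (cases "{x0\<in>D. \<not> real (card D) \<le> 2 * real (card {x\<in>D. d x0 \<le> d x})} = {}")
  case False
  let ?Bd = "{x0\<in>D. \<not> real (card D) \<le> 2 * real (card {x\<in>D. d x0 \<le> d x})}"
  have "Min (d ` ?Bd) \<in> d ` ?Bd" using False assms by (intro Min_in) auto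
  then obtain y where "y \<in> ?Bd" "d y = Min (d ` ?Bd)" by auto
  then have y: "y \<in> ?Bd" "\<And>x. x \<in> ?Bd \<Longrightarrow> d y \<le> d x" using assms by auto
  have "?Bd \<subseteq> {x\<in>D. d y \<le> d x}" using y(2) by auto
  then have "card ?Bd \<le> card {x\<in>D. d y \<le> d x}" using assms by (intro card_mono) auto
  moreover have "real (card D) > 2 * real (card {x\<in>D. d y \<le> d x})" using y(1) by auto
  ultimately show ?thesis by linarith
next
  case True
  then show ?thesis by (simp only: card.empty)
qed

definition early_below_median :: "nat \<Rightarrow> 'a set \<Rightarrow> ('a \<Rightarrow> real) \<Rightarrow> 'a list \<Rightarrow> bool" where
  "early_below_median L D d xs \<longleftrightarrow>
     (\<exists>x0\<in>set (take L (filter (\<lambda>x. x \<in> D) xs)). 2 * real (card {x\<in>D. d x0 \<le> d x}) \<ge> real (card D))"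

lemma card_permutations_not_early_below_median:
  assumes Q: "finite Q" and DQ: "D \<subseteq> Q" and D: "D \<noteq> {}"
  shows "real (card {ps \<in> permutations_of_set Q. \<not> early_below_median L D d ps}) \<le> (1/2) ^ L * fact (card Q)"
proof -
  have fD: "finite D" using Q DQ finite_subset by auto
  let ?Bd = "{x0\<in>D. \<not> real (card D) \<le> 2 * real (card {x\<in>D. d x0 \<le> d x})}"
  have "{ps \<in> permutations_of_set Q. \<not> early_below_median L D d ps}
      \<subseteq> {ps \<in> permutations_of_set Q. set (take L (filter (\<lambda>x. x \<in> D) ps)) \<subseteq> ?Bd}"
    unfolding early_below_median_def using set_take_subset by fastforce
  then have "real (card {ps \<in> permutations_of_set Q. \<not> early_below_median L D d ps})
      \<le> real (card {ps \<in> permutations_of_set Q. set (take L (filter (\<lambda>x. x \<in> D) ps)) \<subseteq> ?Bd})"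
    by (simp add: card_mono)
  also have "\<dots> \<le> (real (card ?Bd) / real (card D)) ^ L * fact (card Q)"
    using card_permutations_take_filter_subset[OF Q DQ, of ?Bd L] D by (auto simp: share_def)
  also have "\<dots> \<le> (1/2) ^ L * fact (card Q)"
  proof -
    have "real (card D) > 0" using fD D by (simp add: card_gt_0_iff)
    moreover have "2 * card ?Bd \<le> card D" by (rule card_below_median_le[OF fD])
    ultimately have "real (card ?Bd) / real (card D) \<le> 1/2" by (simp add: field_simps)
    then show ?thesis by (intro mult_right_mono power_mono) auto
  qed
  finally show ?thesis .
qed

section \<open>Events depending on the first points of a random ordering\<close>

lemma card_permutations_prefix_set_not_well_rep:
  assumes X: "finite X" and s: "s \<le> card X" and C: "\<And>i. i < m \<Longrightarrow> C i \<subseteq> X" and ph: "0 < ph"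
    and L: "10 * L \<le> real s * ph / real (card X)"
  shows "real (card {xs \<in> permutations_of_set X.
            \<exists>i<m. ph \<le> real (card (C i)) \<and> \<not> well_rep X (set (take s xs)) (C i)})
         \<le> real m * (2 * exp (-L) * fact (card X))"
proof -
  have "real (card {xs \<in> permutations_of_set X. ph \<le> real (card (C i)) \<and> \<not> well_rep X (set (take s xs)) (C i)})
      \<le> 2 * exp (-L) * fact (card X)" if i: "i < m" for i
  proof (cases "ph \<le> real (card (C i))")
    case True
    then have "C i \<noteq> {}" using ph by auto
    have "real s * ph / real (card X) \<le> real s * real (card (C i)) / real (card X)"
      using True by (intro divide_right_mono mult_left_mono) auto
    then have "10 * L \<le> real s * real (card (C i)) / real (card X)" by (rule order_trans[OF L])
    then show ?thesis using card_permutations_not_well_rep[OF X C[OF i] \<open>C i \<noteq> {}\<close> s] True by simp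
  qed simp
  then have "real (card {xs \<in> permutations_of_set X.
      \<exists>i<m. ph \<le> real (card (C i)) \<and> \<not> well_rep X (set (take s xs)) (C i)})
      \<le> (\<Sum>i<m. 2 * exp (-L) * fact (card X))"
    by (rule card_Collect_ex_less_le)
  then show ?thesis by (simp add: sum_constant)
qed

lemma card_permutations_prefix_window_le:
  assumes X: "finite X" and at: "a \<le> t" "t + s \<le> card X"
    and b: "\<And>A. A \<subseteq> X \<Longrightarrow> card A = a \<Longrightarrow>
          real (card {vs \<in> permutations_of_set (X - A). \<Psi> A (take s vs)}) \<le> \<epsilon> * fact (card (X - A))"
  shows "real (card {xs \<in> permutations_of_set X. \<Psi> (set (take a xs)) (take s (drop t xs))})
       \<le> \<epsilon> * fact (card X)"
proof -
  have "real (card {xs \<in> permutations_of_set X.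
          (\<lambda>A vs. \<Psi> A (take s (drop (t - a) vs))) (set (take a xs)) (drop a xs)}) \<le> \<epsilon> * fact (card X)"
  proof (rule card_permutations_prefix_set_suffix_le[OF X])
    show "a \<le> card X" using at by simp
    fix A assume A: "A \<subseteq> X" "card A = a"
    then have XA: "finite (X - A)" "card (X - A) = card X - a"
      using X by (auto simp: card_Diff_subset finite_subset)
    show "real (card {vs \<in> permutations_of_set (X - A). \<Psi> A (take s (drop (t - a) vs))}) \<le> \<epsilon> * fact (card X - a)"
      using card_permutations_window[OF XA(1), of "t - a" s "\<Psi> A"] b[OF A] at XA by simp
  qed
  then show ?thesis using at by (simp add: drop_drop)
qed

lemma card_permutations_far_not_well_rep:
  fixes X :: "'a::linorder set" and T :: "'a set \<Rightarrow> 'a set"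
  assumes X: "finite X" and at: "a \<le> t" "t + s \<le> card X" and r0: "0 < r"
    and L: "10 * L \<le> real s * r / real (card X - a)"
  shows "real (card {xs \<in> permutations_of_set X. \<not> far_trivial r (X - set (take a xs)) \<and>
            \<not> well_rep (X - set (take a xs)) (set (take s (drop t xs)))
               (far \<rho> r (X - set (take a xs)) (T (set (take a xs))))})
         \<le> 2 * exp (-L) * fact (card X)"
proof (rule card_permutations_prefix_window_le[OF X at])
  fix A assume A: "A \<subseteq> X" "card A = a"
  then have XA: "finite (X - A)" "card (X - A) = card X - a"
    using X by (auto simp: card_Diff_subset finite_subset)
  let ?F = "far \<rho> r (X - A) (T A)"
  show "real (card {vs \<in> permutations_of_set (X - A). \<not> far_trivial r (X - A) \<and>
      \<not> well_rep (X - A) (set (take s vs)) ?F}) \<le> 2 * exp (-L) * fact (card (X - A))"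
  proof (cases "far_trivial r (X - A)")
    case False
    then have "r \<le> real (card (X - A))" unfolding far_trivial_def by simp
    then have F: "?F \<subseteq> X - A" "r \<le> real (card ?F)"
      using card_far[OF XA(1), of r \<rho> "T A"] real_nat_ceiling_ge[of r] by (simp_all add: far_subset)
    then have "?F \<noteq> {}" using r0 by auto
    have "real s * r / real (card X - a) \<le> real s * real (card ?F) / real (card (X - A))"
      unfolding XA(2) using F(2) by (intro divide_right_mono mult_left_mono) auto
    then have "10 * L \<le> real s * real (card ?F) / real (card (X - A))" by (rule order_trans[OF L])
    moreover have "s \<le> card (X - A)" using at XA by simp
    ultimately show ?thesis
      using card_permutations_not_well_rep[OF XA(1) F(1) \<open>?F \<noteq> {}\<close>] False by simp
  qed simp
qed

lemma card_permutations_bins_not_well_rep: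
  fixes X :: "'a::linorder set"
  assumes X: "finite X" and at: "a \<le> t" "t + s \<le> card X" and z0: "0 < z"
    and L: "10 * L \<le> real s * z / real (card X - a)" and L64: "64 \<le> exp L"
    and W: "\<And>S. S \<subseteq> X \<Longrightarrow> card S = a \<Longrightarrow> W S \<subseteq> X - S"
    and Bs: "\<And>S. S \<subseteq> X \<Longrightarrow> card S = a \<Longrightarrow> linear_bin_division \<rho> z (W S) (T S) (Bs S)"
  shows "real (card {xs \<in> permutations_of_set X. \<not> bins_trivial z (W (set (take a xs))) \<and>
            \<not> bins_well_rep (X - set (take a xs)) (set (take s (drop t xs))) (Bs (set (take a xs)))})
         \<le> 16/7 * exp (-L) * fact (card X)"
proof (rule card_permutations_prefix_window_le[OF X at])
  fix A assume A: "A \<subseteq> X" "card A = a"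
  then have XA: "finite (X - A)" "card (X - A) = card X - a"
    using X by (auto simp: card_Diff_subset finite_subset)
  show "real (card {vs \<in> permutations_of_set (X - A). \<not> bins_trivial z (W A) \<and>
      \<not> bins_well_rep (X - A) (set (take s vs)) (Bs A)}) \<le> 16/7 * exp (-L) * fact (card (X - A))"
  proof (cases "bins_trivial z (W A)")
    case False
    then have "z \<le> real (card (W A))" unfolding bins_trivial_def by simp
    then have "real (card {vs \<in> permutations_of_set (X - A). \<not> bins_well_rep (X - A) (set (take s vs)) (Bs A)})
        \<le> 16/7 * exp (-L) * fact (card (X - A))"
      by (rule card_permutations_not_bins_well_rep[OF XA(1) W[OF A] Bs[OF A] _ z0 _ _ L64])
         (use at XA L in simp_all)
    then show ?thesis using False by simp
  qed simp
qed

lemma filter_mem_take_drop: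
  assumes "distinct xs" "D \<subseteq> set (take g (drop t xs))"
  shows "filter (\<lambda>x. x \<in> D) xs = filter (\<lambda>x. x \<in> D) (take g (drop t xs))"
proof -
  have xs: "xs = take t xs @ take g (drop t xs) @ drop g (drop t xs)"
    by (metis append_take_drop_id)
  then have "distinct (take t xs @ take g (drop t xs) @ drop g (drop t xs))"
    using assms(1) by simp
  then have "set (take t xs) \<inter> D = {}" "set (drop g (drop t xs)) \<inter> D = {}"
    using assms(2) unfolding distinct_append set_append by blast+
  then have "filter (\<lambda>x. x \<in> D) (take t xs) = []" "filter (\<lambda>x. x \<in> D) (drop g (drop t xs)) = []"
    by (auto simp: filter_empty_conv)
  then show ?thesis by (subst xs) simp
qed

lemma card_permutations_ex_not_early_below_median:
  assumes Q: "finite Q"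
  shows "real (card {us \<in> permutations_of_set Q. \<exists>i<m.
            C i \<inter> set us \<noteq> {} \<and> \<not> early_below_median L (C i \<inter> set us) (d i) us})
         \<le> real m * ((1/2) ^ L * fact (card Q))"
proof -
  have "real (card {us \<in> permutations_of_set Q. C i \<inter> set us \<noteq> {} \<and>
      \<not> early_below_median L (C i \<inter> set us) (d i) us}) \<le> (1/2) ^ L * fact (card Q)" for i
  proof -
    have "{us \<in> permutations_of_set Q. C i \<inter> set us \<noteq> {} \<and> \<not> early_below_median L (C i \<inter> set us) (d i) us}
        = (if C i \<inter> Q = {} then {}
           else {us \<in> permutations_of_set Q. \<not> early_below_median L (C i \<inter> Q) (d i) us})"
      by (auto simp: permutations_of_set_def)
    then show ?thesis using card_permutations_not_early_below_median[OF Q, of "C i \<inter> Q" L "d i"] by simp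
  qed
  then have "real (card {us \<in> permutations_of_set Q. \<exists>i<m.
      C i \<inter> set us \<noteq> {} \<and> \<not> early_below_median L (C i \<inter> set us) (d i) us})
      \<le> (\<Sum>i<m. (1/2) ^ L * fact (card Q))"
    by (rule card_Collect_ex_less_le)
  then show ?thesis by (simp add: sum_constant)
qed

lemma card_permutations_window_not_early_below_median:
  fixes C :: "'a set \<Rightarrow> nat \<Rightarrow> 'a set" and d :: "'a set \<Rightarrow> nat \<Rightarrow> 'a \<Rightarrow> real"
  assumes X: "finite X" and at: "a \<le> t" "t + g \<le> card X"
    and m: "\<And>S. S \<subseteq> X \<Longrightarrow> card S = a \<Longrightarrow> real (m S) * (1/2) ^ L \<le> \<epsilon>"
  shows "real (card {xs \<in> permutations_of_set X. \<exists>i<m (set (take a xs)).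
      C (set (take a xs)) i \<inter> set (take g (drop t xs)) \<noteq> {} \<and>
      \<not> early_below_median L (C (set (take a xs)) i \<inter> set (take g (drop t xs))) (d (set (take a xs)) i) xs})
    \<le> \<epsilon> * fact (card X)"
proof -
  let ?\<Psi> = "\<lambda>A us. \<exists>i<m A. C A i \<inter> set us \<noteq> {} \<and> \<not> early_below_median L (C A i \<inter> set us) (d A i) us"
  have "real (card {xs \<in> permutations_of_set X. ?\<Psi> (set (take a xs)) (take g (drop t xs))})
      \<le> \<epsilon> * fact (card X)"
  proof (rule card_permutations_prefix_window_le[OF X at])
    fix A assume A: "A \<subseteq> X" "card A = a"
    then have XA: "finite (X - A)" "g \<le> card (X - A)"
      using X at by (auto simp: card_Diff_subset finite_subset)
    have "real (card {vs \<in> permutations_of_set (X - A). ?\<Psi> A (take g vs)})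
        \<le> real (m A) * (1/2) ^ L * fact (card (X - A))"
    proof (rule card_permutations_prefix_le[OF XA])
      fix A' assume A': "A' \<subseteq> X - A" "card A' = g"
      then have "finite A'" using XA(1) finite_subset by blast
      from card_permutations_ex_not_early_below_median[OF this, of "m A" "C A" L "d A"]
      show "real (card {us \<in> permutations_of_set A'. ?\<Psi> A us}) \<le> real (m A) * (1/2) ^ L * fact g"
        using A'(2) by (simp add: mult.assoc)
    qed
    also have "\<dots> \<le> \<epsilon> * fact (card (X - A))" using m[OF A] by (intro mult_right_mono) auto
    finally show "real (card {vs \<in> permutations_of_set (X - A). ?\<Psi> A (take g vs)})
        \<le> \<epsilon> * fact (card (X - A))" .
  qed
  moreover have "early_below_median L D e xs = early_below_median L D e (take g (drop t xs))"
    if "xs \<in> permutations_of_set X" "D \<subseteq> set (take g (drop t xs))" for D e and xs :: "'a list"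
    using that filter_mem_take_drop[of xs D g t] unfolding early_below_median_def
    by (simp add: permutations_of_set_def)
  then have "{xs \<in> permutations_of_set X. ?\<Psi> (set (take a xs)) (take g (drop t xs))}
      = {xs \<in> permutations_of_set X. \<exists>i<m (set (take a xs)).
          C (set (take a xs)) i \<inter> set (take g (drop t xs)) \<noteq> {} \<and>
          \<not> early_below_median L (C (set (take a xs)) i \<inter> set (take g (drop t xs))) (d (set (take a xs)) i) xs}"
    by (auto simp: Int_lower2)
  ultimately show ?thesis by simp
qed

section \<open>The sampling event\<close>

lemma half_power_ceiling_log_le:
  fixes K \<delta> :: real
  assumes "K > 0" "\<delta> > 0"
  shows "K * (1/2) ^ nat \<lceil>log 2 (8 * K / \<delta>)\<rceil> \<le> \<delta> / 8"
proof -
  let ?q = "nat \<lceil>log 2 (8 * K / \<delta>)\<rceil>"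
  have pos: "8 * K / \<delta> > 0" using assms by simp
  have "log 2 (8 * K / \<delta>) \<le> real ?q" by linarith
  then have "2 powr (log 2 (8 * K / \<delta>)) \<le> 2 powr real ?q" by (intro powr_mono) auto
  then have "8 * K / \<delta> \<le> 2 ^ ?q" using pos by (simp add: powr_realpow)
  then show ?thesis using assms by (simp add: power_one_over field_simps)
qed

lemma sample_rate_ge:
  fixes a b n :: nat and \<alpha> \<beta> r :: real
  assumes "real b = \<beta> * real n" "\<alpha> \<le> \<beta>" "a < n" "r \<ge> 0"
  shows "\<alpha> * r \<le> real b * r / real n" "real b * r / real n \<le> real b * r / real (n - a)"
proof -
  have "\<beta> = real b / real n" using assms by (simp add: field_simps)
  then show "\<alpha> * r \<le> real b * r / real n" using assms by (simp add: mult_right_mono)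
  show "real b * r / real n \<le> real b * r / real (n - a)"
    using assms by (intro divide_left_mono) auto
qed

locale random_order_sample =
  fixes X :: "'a::linorder set" and \<rho> :: "'a \<Rightarrow> 'a \<Rightarrow> real"
    and k :: nat and \<delta> \<alpha> \<gamma> :: real and a g :: nat
    and copt :: "'a list"
    and cs :: "'a set \<Rightarrow> 'a list"
    and Ba :: "'a set list"
    and Bb Bc :: "'a set \<Rightarrow> 'a list \<Rightarrow> 'a set list"
  assumes finX: "finite X" and X_ne: "X \<noteq> {}"
    and k2: "k \<ge> 2" and \<delta>: "0 < \<delta>" "\<delta> < 1"
    and opt_len: "length copt \<le> k"
    and \<alpha>: "0 < \<alpha>" and \<gamma>: "\<alpha> \<le> \<gamma>" "\<gamma> \<le> 1 - 2 * \<alpha>"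
    and a_def: "real a = \<alpha> * real (card X)" and g_def: "real g = \<gamma> * real (card X)"
    and cs_len: "\<And>S. S \<subseteq> X \<Longrightarrow> card S = a \<Longrightarrow> real (length (cs S)) \<le> kplus k \<delta>"
    and Ba_ok: "linear_bin_division \<rho> (phi k \<delta> \<alpha> / 15) X (set copt) Ba"
    and Bb_ok: "\<And>S. S \<subseteq> X \<Longrightarrow> card S = a \<Longrightarrow>
        linear_bin_division \<rho> (phi k \<delta> \<alpha> / 3)
          ((X - S) - far \<rho> (real k * phi k \<delta> \<alpha>) (X - S) (set (cs S))) (set (cs S)) (Bb S (cs S))"
    and Bc_ok: "\<And>S. S \<subseteq> X \<Longrightarrow> card S = a \<Longrightarrow>
        linear_bin_division \<rho> (phi k \<delta> \<alpha> / 3)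
          ((X - S) - far \<rho> (4 * (real k + 1) * phi k \<delta> \<alpha>) (X - S) (set (cs S))) (set (cs S)) (Bc S (cs S))"
begin

abbreviation "ph \<equiv> phi k \<delta> \<alpha>"
abbreviation "lg \<equiv> ln (32 * real k / \<delta>)"
abbreviation "P1 xs \<equiv> set (take a xs)"
abbreviation "P2 xs \<equiv> set (take a (drop a xs))"
abbreviation "P3 xs \<equiv> set (take g (drop (2 * a) xs))"
abbreviation "F r xs \<equiv> far \<rho> r (X - P1 xs) (set (cs (P1 xs)))"

definition opt_clusters_well_rep :: "'a list \<Rightarrow> bool" where
  "opt_clusters_well_rep xs \<longleftrightarrow> (\<forall>i<length copt. real (card (cluster \<rho> X copt i)) \<ge> ph \<longrightarrow>
      well_rep X (P1 xs) (cluster \<rho> X copt i) \<and> well_rep X (P1 xs \<union> P2 xs) (cluster \<rho> X copt i))"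

definition far_sets_well_rep :: "'a list \<Rightarrow> bool" where
  "far_sets_well_rep xs \<longleftrightarrow>
      (far_trivial (real k * ph) (X - P1 xs) \<or> well_rep (X - P1 xs) (P2 xs) (F (real k * ph) xs))
    \<and> (far_trivial (4 * (real k + 1) * ph) (X - P1 xs) \<or>
         well_rep (X - P1 xs) (P2 xs) (F (4 * (real k + 1) * ph) xs))
    \<and> (far_trivial (5 * (real k + 1) * ph) (X - P1 xs) \<or>
         well_rep (X - P1 xs) (P3 xs) (F (5 * (real k + 1) * ph) xs))"

definition bin_divisions_well_rep :: "'a list \<Rightarrow> bool" where
  "bin_divisions_well_rep xs \<longleftrightarrow>
      (bins_trivial (ph / 15) X \<or> bins_well_rep X (P1 xs) Ba)
    \<and> (bins_trivial (ph / 3) ((X - P1 xs) - F (real k * ph) xs) \<or>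
         bins_well_rep (X - P1 xs) (P2 xs) (Bb (P1 xs) (cs (P1 xs))))
    \<and> (bins_trivial (ph / 3) ((X - P1 xs) - F (4 * (real k + 1) * ph) xs) \<or>
         bins_well_rep (X - P1 xs) (P2 xs) (Bc (P1 xs) (cs (P1 xs))))"

definition clusters_early_below_median :: "'a list \<Rightarrow> bool" where
  "clusters_early_below_median xs \<longleftrightarrow> (\<forall>i<length (cs (P1 xs)). cluster \<rho> X (cs (P1 xs)) i \<inter> P3 xs \<noteq> {} \<longrightarrow>
      early_below_median (nat \<lceil>log 2 (8 * kplus k \<delta> / \<delta>)\<rceil>) (cluster \<rho> X (cs (P1 xs)) i \<inter> P3 xs)
        (\<rho> (cs (P1 xs) ! i)) xs)"

lemma lg_bounds: "0 < lg" "64 \<le> exp lg" "exp (- lg) = \<delta> / (32 * real k)"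
proof -
  have "64 \<le> 32 * real k" using k2 by simp
  also have "\<dots> \<le> 32 * real k / \<delta>" using \<delta> k2 by (simp add: field_simps)
  finally have "64 \<le> 32 * real k / \<delta>" .
  then show "0 < lg" "64 \<le> exp lg" "exp (- lg) = \<delta> / (32 * real k)"
    by (simp_all add: exp_minus inverse_eq_divide)
qed

lemma alpha_phi: "\<alpha> * ph = 150 * lg" "0 < ph"
  using \<alpha> lg_bounds(1) by (simp_all add: phi_def)

lemma window_sizes: "a + a + g \<le> card X" "a < card X"
proof -
  have "real (a + a + g) = (2 * \<alpha> + \<gamma>) * real (card X)" using a_def g_def by (simp add: algebra_simps)
  also have "\<dots> \<le> 1 * real (card X)" using \<gamma> by (intro mult_right_mono) auto
  finally show "a + a + g \<le> card X" by simp
  have "0 < card X" using finX X_ne by (simp add: card_gt_0_iff)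
  then have "0 < real a" using a_def \<alpha> by simp
  then have "0 < a" by simp
  then show "a < card X" using \<open>a + a + g \<le> card X\<close> by linarith
qed

lemma exp_minus_lg_le: "2 * exp (- lg) \<le> \<delta> / 32" "16/7 * exp (- lg) \<le> \<delta> / 28"
proof -
  have "2 * exp (- lg) = \<delta> / (16 * real k)" "16/7 * exp (- lg) = \<delta> / (14 * real k)"
    using lg_bounds(3) by simp_all
  moreover have "\<delta> / (16 * real k) \<le> \<delta> / 32" "\<delta> / (14 * real k) \<le> \<delta> / 28"
    using k2 \<delta> by (intro divide_left_mono; simp)+
  ultimately show "2 * exp (- lg) \<le> \<delta> / 32" "16/7 * exp (- lg) \<le> \<delta> / 28" by simp_all
qed

lemma ten_lg_le:
  assumes "real b = \<beta> * real (card X)" "\<alpha> \<le> \<beta>" "ph / 15 \<le> r"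
  shows "10 * lg \<le> real b * r / real (card X)" "10 * lg \<le> real b * r / real (card X - a)"
proof -
  have "\<alpha> * (ph / 15) \<le> \<alpha> * r" using assms(3) \<alpha> by (intro mult_left_mono) auto
  then have "10 * lg \<le> \<alpha> * r" using alpha_phi(1) by simp
  then show "10 * lg \<le> real b * r / real (card X)" "10 * lg \<le> real b * r / real (card X - a)"
    using sample_rate_ge[OF assms(1,2) window_sizes(2), of r] alpha_phi(2) assms(3) by auto
qed

lemma card_not_opt_clusters_well_rep:
  "real (card {xs \<in> permutations_of_set X. \<not> opt_clusters_well_rep xs}) \<le> \<delta> / 8 * fact (card X)"
proof -
  define bad where "bad s xs \<longleftrightarrow> (\<exists>i<length copt.
      ph \<le> real (card (cluster \<rho> X copt i)) \<and> \<not> well_rep X (set (take s xs)) (cluster \<rho> X copt i))"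
    for s and xs :: "'a list"
  have each: "real (card {xs \<in> permutations_of_set X. bad s xs}) \<le> \<delta> / 16 * fact (card X)"
    if "s = a \<or> s = 2 * a" for s
  proof -
    have "s \<le> card X" "10 * lg \<le> real s * ph / real (card X)"
      using that window_sizes ten_lg_le(1)[of a \<alpha> ph] ten_lg_le(1)[of "2 * a" "2 * \<alpha>" ph] a_def \<alpha> alpha_phi
      by auto
    then have "real (card {xs \<in> permutations_of_set X. bad s xs})
        \<le> real (length copt) * (2 * exp (- lg) * fact (card X))"
      unfolding bad_def
      by (intro card_permutations_prefix_set_not_well_rep[OF finX] alpha_phi(2)) (auto simp: cluster_def)
    also have "\<dots> \<le> real k * (2 * exp (- lg) * fact (card X))"
      using opt_len by (intro mult_right_mono) auto
    also have "\<dots> = \<delta> / 16 * fact (card X)"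
      using lg_bounds(3) k2 by simp
    finally show ?thesis .
  qed
  have "P1 xs \<union> P2 xs = set (take (2 * a) xs)" for xs :: "'a list"
    by (simp add: mult_2 take_add)
  then have "{xs \<in> permutations_of_set X. \<not> opt_clusters_well_rep xs}
      = {xs \<in> permutations_of_set X. bad a xs \<or> bad (2 * a) xs}"
    unfolding opt_clusters_well_rep_def bad_def by auto
  then show ?thesis
    using card_Collect_disj_le[OF each each] by simp
qed

lemma card_not_far_sets_well_rep:
  "real (card {xs \<in> permutations_of_set X. \<not> far_sets_well_rep xs}) \<le> 3 * (\<delta> / 32) * fact (card X)"
proof -
  have each: "real (card {xs \<in> permutations_of_set X. \<not> far_trivial r (X - P1 xs) \<and>
      \<not> well_rep (X - P1 xs) (set (take s (drop t xs))) (F r xs)}) \<le> \<delta> / 32 * fact (card X)"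
    if "ph \<le> r" "t = a \<and> s = a \<or> t = 2 * a \<and> s = g" for r s t
  proof -
    have "10 * lg \<le> real s * r / real (card X - a)" "a \<le> t" "t + s \<le> card X" "0 < r"
      using that ten_lg_le(2)[of a \<alpha> r] ten_lg_le(2)[of g \<gamma> r] a_def g_def \<gamma> window_sizes alpha_phi(2)
      by auto
    then have "real (card {xs \<in> permutations_of_set X. \<not> far_trivial r (X - P1 xs) \<and>
        \<not> well_rep (X - P1 xs) (set (take s (drop t xs))) (F r xs)}) \<le> 2 * exp (- lg) * fact (card X)"
      by (intro card_permutations_far_not_well_rep[OF finX])
    also have "\<dots> \<le> \<delta> / 32 * fact (card X)"
      using exp_minus_lg_le(1) by (intro mult_right_mono) auto
    finally show ?thesis .
  qed
  have "ph \<le> real k * ph" "ph \<le> 4 * (real k + 1) * ph" "ph \<le> 5 * (real k + 1) * ph"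
    using alpha_phi(2) k2 by auto
  note b = each[OF this(1) disjI1[OF conjI[OF refl refl]]]
    and c = each[OF this(2) disjI1[OF conjI[OF refl refl]]]
    and d = each[OF this(3) disjI2[OF conjI[OF refl refl]]]
  from card_Collect_disj_le[OF b card_Collect_disj_le[OF c d]]
  show ?thesis unfolding far_sets_well_rep_def by (simp add: de_Morgan_conj)
qed

lemma card_not_bin_divisions_well_rep:
  "real (card {xs \<in> permutations_of_set X. \<not> bin_divisions_well_rep xs}) \<le> 3 * (\<delta> / 28) * fact (card X)"
proof -
  have small: "16/7 * exp (- lg) * fact (card X) \<le> \<delta> / 28 * fact (card X)"
    using exp_minus_lg_le(2) by (intro mult_right_mono) auto
  have a: "real (card {xs \<in> permutations_of_set X. \<not> bins_trivial (ph / 15) X \<and> \<not> bins_well_rep X (P1 xs) Ba})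
      \<le> \<delta> / 28 * fact (card X)"
  proof (cases "bins_trivial (ph / 15) X")
    case False
    then have "ph / 15 \<le> real (card X)" unfolding bins_trivial_def by simp
    from card_permutations_not_bins_well_rep[OF finX subset_refl Ba_ok this _ _
        ten_lg_le(1)[OF a_def order_refl order_refl] lg_bounds(2)]
    have "real (card {xs \<in> permutations_of_set X. \<not> bins_well_rep X (P1 xs) Ba})
        \<le> 16/7 * exp (- lg) * fact (card X)"
      using alpha_phi(2) window_sizes by simp
    then have "real (card {xs \<in> permutations_of_set X. \<not> bins_well_rep X (P1 xs) Ba}) \<le> \<delta> / 28 * fact (card X)"
      using small by linarith
    then show ?thesis using False by simp
  qed (use \<delta> in simp)
  have bc: "real (card {xs \<in> permutations_of_set X. \<not> bins_trivial (ph / 3) ((X - P1 xs) - F r xs) \<and>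
      \<not> bins_well_rep (X - P1 xs) (P2 xs) (B (P1 xs) (cs (P1 xs)))}) \<le> \<delta> / 28 * fact (card X)"
    if B: "\<And>S. S \<subseteq> X \<Longrightarrow> card S = a \<Longrightarrow>
        linear_bin_division \<rho> (ph / 3) ((X - S) - far \<rho> r (X - S) (set (cs S))) (set (cs S)) (B S (cs S))"
    for r B
  proof -
    have "10 * lg \<le> real a * (ph / 3) / real (card X - a)"
      by (rule ten_lg_le(2)[OF a_def order_refl]) (use alpha_phi(2) in simp)
    moreover have "a + a \<le> card X" "0 < ph / 3" using window_sizes alpha_phi(2) by auto
    ultimately have "real (card {xs \<in> permutations_of_set X. \<not> bins_trivial (ph / 3) ((X - P1 xs) - F r xs) \<and>
        \<not> bins_well_rep (X - P1 xs) (P2 xs) (B (P1 xs) (cs (P1 xs)))}) \<le> 16/7 * exp (- lg) * fact (card X)"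
      by (intro card_permutations_bins_not_well_rep[OF finX order_refl _ _ _ lg_bounds(2) _ B]) auto
    then show ?thesis using small by linarith
  qed
  from card_Collect_disj_le[OF a card_Collect_disj_le[OF bc[of _ Bb, OF Bb_ok] bc[of _ Bc, OF Bc_ok]]]
  show ?thesis unfolding bin_divisions_well_rep_def de_Morgan_conj de_Morgan_disj by linarith
qed

lemma card_not_clusters_early_below_median:
  "real (card {xs \<in> permutations_of_set X. \<not> clusters_early_below_median xs}) \<le> \<delta> / 8 * fact (card X)"
proof -
  let ?L = "nat \<lceil>log 2 (8 * kplus k \<delta> / \<delta>)\<rceil>"
  have "0 < kplus k \<delta>" using lg_bounds(1) unfolding kplus_def by simp
  have "real (length (cs S)) * (1/2) ^ ?L \<le> \<delta> / 8" if "S \<subseteq> X" "card S = a" for S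
  proof -
    have "real (length (cs S)) * (1/2) ^ ?L \<le> kplus k \<delta> * (1/2) ^ ?L"
      using cs_len[OF that] by (intro mult_right_mono) auto
    also have "\<dots> \<le> \<delta> / 8" by (rule half_power_ceiling_log_le[OF \<open>0 < kplus k \<delta>\<close> \<delta>(1)])
    finally show ?thesis .
  qed
  from card_permutations_window_not_early_below_median[where t = "2 * a" and g = g
      and C = "\<lambda>S i. cluster \<rho> X (cs S) i" and d = "\<lambda>S i. \<rho> (cs S ! i)"
      and m = "\<lambda>S. length (cs S)", OF finX _ _ this]
  show ?thesis
    using window_sizes unfolding clusters_early_below_median_def not_all not_imp by (simp add: mult_2)
qed

theorem prob_sample_event:
  "1 - \<delta> / 2 \<le> measure_pmf.prob (pmf_of_set (permutations_of_set X))
     {xs. opt_clusters_well_rep xs \<and> far_sets_well_rep xs \<and> bin_divisions_well_rep xs \<and> clusters_early_below_median xs}"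
proof (rule prob_permutations_ge[OF finX])
  have "0 \<le> \<delta> * fact (card X)" using \<delta> by simp
  with card_Collect_disj_le[OF card_not_opt_clusters_well_rep card_Collect_disj_le[OF card_not_far_sets_well_rep
      card_Collect_disj_le[OF card_not_bin_divisions_well_rep card_not_clusters_early_below_median]]]
  show "real (card {xs \<in> permutations_of_set X.
      \<not> (opt_clusters_well_rep xs \<and> far_sets_well_rep xs \<and> bin_divisions_well_rep xs \<and> clusters_early_below_median xs)})
      \<le> \<delta> / 2 * fact (card X)"
    unfolding de_Morgan_conj by linarith
qed

end

theorem lemma10:
  fixes X :: "'a::linorder set" and \<rho> :: "'a \<Rightarrow> 'a \<Rightarrow> real"
    and k :: nat and \<delta> \<alpha> \<gamma> :: real and a g :: nat
    and copt :: "'a list"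
    and cs :: "'a set \<Rightarrow> 'a list"
    and Ba :: "'a set list"
    and Bb Bc :: "'a set \<Rightarrow> 'a list \<Rightarrow> 'a set list"
  assumes finX: "finite X" and met: "metric_on X \<rho>"
    and k2: "k \<ge> 2" and \<delta>: "0 < \<delta>" "\<delta> < 1"
    and opt_sub: "set copt \<subseteq> X" and opt_ne: "copt \<noteq> []"
    and opt_dist: "distinct copt" and opt_len: "length copt \<le> k"
    and opt_min: "\<And>T. T \<subseteq> X \<Longrightarrow> T \<noteq> {} \<Longrightarrow> card T \<le> k \<Longrightarrow>
                    cost \<rho> X (set copt) \<le> cost \<rho> X T"
    and \<alpha>: "0 < \<alpha>" "\<alpha> \<le> 1/6" and \<gamma>: "\<alpha> \<le> \<gamma>" "\<gamma> \<le> 1 - 2 * \<alpha>"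
    and a_def: "real a = \<alpha> * real (card X)" and g_def: "real g = \<gamma> * real (card X)"
    and cs_ok: "\<And>S. S \<subseteq> X \<Longrightarrow> card S = a \<Longrightarrow>
        cs S \<noteq> [] \<and> distinct (cs S) \<and> set (cs S) \<subseteq> X \<and> real (length (cs S)) \<le> kplus k \<delta>"
    and Ba_ok: "linear_bin_division \<rho> (phi k \<delta> \<alpha> / 15) X (set copt) Ba"
    and Bb_ok: "\<And>S. S \<subseteq> X \<Longrightarrow> card S = a \<Longrightarrow>
        linear_bin_division \<rho> (phi k \<delta> \<alpha> / 3)
          ((X - S) - far \<rho> (real k * phi k \<delta> \<alpha>) (X - S) (set (cs S))) (set (cs S)) (Bb S (cs S))"
    and Bc_ok: "\<And>S. S \<subseteq> X \<Longrightarrow> card S = a \<Longrightarrow>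
        linear_bin_division \<rho> (phi k \<delta> \<alpha> / 3)
          ((X - S) - far \<rho> (4 * (real k + 1) * phi k \<delta> \<alpha>) (X - S) (set (cs S))) (set (cs S)) (Bc S (cs S))"
  shows "measure_pmf.prob (pmf_of_set (permutations_of_set X))
     {xs. let P1 = set (take a xs);
              P2 = set (take a (drop a xs));
              P3 = set (take g (drop (2 * a) xs));
              T = cs P1;
              ph = phi k \<delta> \<alpha>;
              Fb = far \<rho> (real k * ph) (X - P1) (set T);
              Fc = far \<rho> (4 * (real k + 1) * ph) (X - P1) (set T);
              Fd = far \<rho> (5 * (real k + 1) * ph) (X - P1) (set T);
              L = nat \<lceil>log 2 (8 * kplus k \<delta> / \<delta>)\<rceil>
          in (\<forall>i<length copt. real (card (cluster \<rho> X copt i)) \<ge> ph \<longrightarrow>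
                 well_rep X P1 (cluster \<rho> X copt i) \<and> well_rep X (P1 \<union> P2) (cluster \<rho> X copt i))
           \<and> (far_trivial (real k * ph) (X - P1) \<or> well_rep (X - P1) P2 Fb)
           \<and> (far_trivial (4 * (real k + 1) * ph) (X - P1) \<or> well_rep (X - P1) P2 Fc)
           \<and> (far_trivial (5 * (real k + 1) * ph) (X - P1) \<or> well_rep (X - P1) P3 Fd)
           \<and> (bins_trivial (ph / 15) X \<or> bins_well_rep X P1 Ba)
           \<and> (bins_trivial (ph / 3) ((X - P1) - Fb) \<or> bins_well_rep (X - P1) P2 (Bb P1 T))
           \<and> (bins_trivial (ph / 3) ((X - P1) - Fc) \<or> bins_well_rep (X - P1) P2 (Bc P1 T))
           \<and> (\<forall>i<length T. cluster \<rho> X T i \<inter> P3 \<noteq> {} \<longrightarrow>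
                 (\<exists>x0\<in>set (take L (filter (\<lambda>x. x \<in> cluster \<rho> X T i \<inter> P3) xs)).
                    2 * real (card {x\<in>cluster \<rho> X T i \<inter> P3. \<rho> (T!i) x0 \<le> \<rho> (T!i) x})
                      \<ge> real (card (cluster \<rho> X T i \<inter> P3))))}
     \<ge> 1 - \<delta> / 2"
proof -
  have "X \<noteq> {}" using opt_sub opt_ne by auto
  moreover have "\<And>S. S \<subseteq> X \<Longrightarrow> card S = a \<Longrightarrow> real (length (cs S)) \<le> kplus k \<delta>"
    using cs_ok by blast
  ultimately interpret random_order_sample X \<rho> k \<delta> \<alpha> \<gamma> a g copt cs Ba Bb Bc
    using finX k2 \<delta> opt_len \<alpha>(1) \<gamma> a_def g_def Ba_ok Bb_ok Bc_ok by unfold_locales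
  show ?thesis
    using prob_sample_event
    unfolding Let_def opt_clusters_well_rep_def far_sets_well_rep_def bin_divisions_well_rep_def
      clusters_early_below_median_def early_below_median_def conj_assoc .
qed

end
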